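(* Let $R$ be a local ring with regular maximal ideal. The following are equivalent: (1) $R$ is a quadratic ring such that $R_\infty$ has exactly three maximal ideals. (2) There is a ring $S$ with $R\subseteq S\subseteq Q(R)$ such that (i) $S$ has exactly three maximal ideals, (ii) each maximal ideal of $S$ is principal and regular with residue field isomorphic to $\mathbb{F}_2$, and (iii) $R=k+\operatorname{Jac} S$, where $k$ is the prime subring of $R$.
   Context: All rings are commutative with identity; a local ring is a ring with a unique maximal ideal (not necessarily Noetherian). $Q(R)$ is the total ring of quotients, $\operatorname{Jac} R$ the Jacobson radical. An ideal is regular if it contains a nonzerodivisor. For a regular fractional ideal $I$ (an $R$-submodule of $Q(R)$ containing a nonzerodivisor with $bI\subseteq R$ for some nonzerodivisor $b\in R$), $E(I)=\{q\in Q(R):qI\subseteq I\}$, and $I$ is stable if it is projective as an $E(I)$-module. An extension $R\subseteq S$ is quadratic if $xy\in xR+yR+R$ for all $x,y\in S$. If $\operatorname{Jac} R$ is regular, define $R_0=R$, $R_i=E(\operatorname{Jac} R_{i-1})$ for $i\ge1$, and $R_\infty=\bigcup_{i\ge1}R_i$. $R$ is a quadratic ring if $R$ is local, its maximal ideal is regular and stable, and $R\subseteq R_\infty$ is a quadratic extension. *)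

theory Defs
  imports Main
begin

text \<open>Convention: all rings considered are subsets of an ambient commutative ring
  of type 'a, which plays the role of the total ring of quotients Q(R) of the
  base ring R (see is_total_quotient_ring).\<close>

definition is_subring :: "'a::comm_ring_1 set \<Rightarrow> bool" where
  "is_subring S \<longleftrightarrow> 0 \<in> S \<and> 1 \<in> S \<and>
     (\<forall>x\<in>S. \<forall>y\<in>S. x + y \<in> S \<and> x - y \<in> S \<and> x * y \<in> S)"

definition nonzerodivisor_in :: "'a::comm_ring_1 set \<Rightarrow> 'a \<Rightarrow> bool" where
  "nonzerodivisor_in S b \<longleftrightarrow> b \<in> S \<and> (\<forall>y\<in>S. b * y = 0 \<longrightarrow> y = 0)"

text \<open>This determines Q(R) up to isomorphism.\<close>
definition is_total_quotient_ring :: "'a::comm_ring_1 set \<Rightarrow> bool" where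
  "is_total_quotient_ring R \<longleftrightarrow> is_subring R \<and>
     (\<forall>b. nonzerodivisor_in R b \<longrightarrow> (\<exists>c. b * c = 1)) \<and>
     (\<forall>q. \<exists>r\<in>R. \<exists>b. nonzerodivisor_in R b \<and> q * b = r)"

definition ideal_in :: "'a::comm_ring_1 set \<Rightarrow> 'a set \<Rightarrow> bool" where
  "ideal_in S I \<longleftrightarrow> I \<subseteq> S \<and> 0 \<in> I \<and>
     (\<forall>x\<in>I. \<forall>y\<in>I. x + y \<in> I \<and> x - y \<in> I) \<and> (\<forall>s\<in>S. \<forall>x\<in>I. s * x \<in> I)"

definition maximal_ideal_in :: "'a::comm_ring_1 set \<Rightarrow> 'a set \<Rightarrow> bool" where
  "maximal_ideal_in S M \<longleftrightarrow> ideal_in S M \<and> M \<noteq> S \<and>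
     (\<forall>J. ideal_in S J \<and> M \<subseteq> J \<longrightarrow> J = M \<or> J = S)"

definition local_ring :: "'a::comm_ring_1 set \<Rightarrow> bool" where
  "local_ring S \<longleftrightarrow> is_subring S \<and> (\<exists>!M. maximal_ideal_in S M)"

definition Jac :: "'a::comm_ring_1 set \<Rightarrow> 'a set" where
  "Jac S = \<Inter>{M. maximal_ideal_in S M}"

definition regular_ideal_in :: "'a::comm_ring_1 set \<Rightarrow> 'a set \<Rightarrow> bool" where
  "regular_ideal_in S I \<longleftrightarrow> ideal_in S I \<and> (\<exists>b\<in>I. nonzerodivisor_in S b)"

definition principal_ideal_in :: "'a::comm_ring_1 set \<Rightarrow> 'a set \<Rightarrow> bool" where
  "principal_ideal_in S I \<longleftrightarrow> (\<exists>m\<in>S. I = {s * m | s. s \<in> S})"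

definition residue_ring :: "'a::comm_ring_1 set \<Rightarrow> 'a set \<Rightarrow> 'a set set" where
  "residue_ring S M = (\<lambda>x. (\<lambda>m. x + m) ` M) ` S"

definition Endo :: "'a::comm_ring_1 set \<Rightarrow> 'a set" where
  "Endo I = {q. \<forall>x\<in>I. q * x \<in> I}"

text \<open>Projectivity of an E-submodule I of Q(R): I is a direct summand of a free
  E-module, expressed as: the canonical surjection from the free module E^(I)
  (finitely supported coordinate functions on the generating set I) onto I has an
  E-linear section f (f x is the coordinate vector of x).\<close>
definition projective_over :: "'a::comm_ring_1 set \<Rightarrow> 'a set \<Rightarrow> bool" where
  "projective_over E I \<longleftrightarrow> (\<forall>e\<in>E. \<forall>x\<in>I. e * x \<in> I) \<and>
     (\<exists>f :: 'a \<Rightarrow> 'a \<Rightarrow> 'a.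
        (\<forall>x\<in>I. \<forall>y\<in>I. f x y \<in> E) \<and>
        (\<forall>x\<in>I. finite {y\<in>I. f x y \<noteq> 0}) \<and>
        (\<forall>x\<in>I. x = (\<Sum>y\<in>{y\<in>I. f x y \<noteq> 0}. f x y * y)) \<and>
        (\<forall>x1\<in>I. \<forall>x2\<in>I. \<forall>y\<in>I. f (x1 + x2) y = f x1 y + f x2 y) \<and>
        (\<forall>e\<in>E. \<forall>x\<in>I. \<forall>y\<in>I. f (e * x) y = e * f x y))"

definition stable :: "'a::comm_ring_1 set \<Rightarrow> bool" where
  "stable I \<longleftrightarrow> projective_over (Endo I) I"

primrec Rseq :: "'a::comm_ring_1 set \<Rightarrow> nat \<Rightarrow> 'a set" where
  "Rseq R 0 = R"
| "Rseq R (Suc i) = Endo (Jac (Rseq R i))"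

definition Rinf :: "'a::comm_ring_1 set \<Rightarrow> 'a set" where
  "Rinf R = (\<Union>i\<in>{1..}. Rseq R i)"

definition quadratic_ext :: "'a::comm_ring_1 set \<Rightarrow> 'a set \<Rightarrow> bool" where
  "quadratic_ext R S \<longleftrightarrow> R \<subseteq> S \<and>
     (\<forall>x\<in>S. \<forall>y\<in>S. \<exists>a\<in>R. \<exists>b\<in>R. \<exists>c\<in>R. x * y = a * x + b * y + c)"

definition quadratic_ring :: "'a::comm_ring_1 set \<Rightarrow> bool" where
  "quadratic_ring R \<longleftrightarrow> local_ring R \<and> regular_ideal_in R (Jac R) \<and>
     stable (Jac R) \<and> quadratic_ext R (Rinf R)"

text \<open>Prime subring of the ambient ring (= prime subring of R, as R contains 1).\<close>
definition prime_subring :: "'a::comm_ring_1 set" where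
  "prime_subring = range of_int"

end

theory Submission
  imports Defs
begin

text \<open>
  If R is local with maximal ideal M and R \<subseteq> T = R_\<infinity> is quadratic, every maximal ideal of T
  contracts to M, and evaluating the relations x^2 = a x + c at elements separating three
  maximal ideals of T forces R/M and all residue fields of T to be F_2. Stability of M makes
  M invertible over E(M); the quadratic relations then produce an element of E(M) separating
  two maximal ideals of T, which gives Jac E(M) = M. Hence the chain R_i stops at
  R_1 = E(M) = T, the invertibility of M makes every maximal ideal of T principal, and
  R = \<int> + M.

  Conversely, for S as in (2) we have S / Jac S = F_2^3, where xy always agrees with an F_2-affine
  function of x and y, so R \<subseteq> S is quadratic. Jac S is principal, generated by a nonzerodivisor,
  hence Jac S = Jac R is free over E(Jac S) = S and R_i = S for all i \<ge> 1.
\<close>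

section \<open>Subrings and ideals\<close>

locale subring =
  fixes S :: "'a::comm_ring_1 set"
  assumes is_subring: "is_subring S"
begin

lemma zero_mem [simp]: "0 \<in> S" and one_mem [simp]: "1 \<in> S"
  using is_subring by (auto simp: is_subring_def)

lemma add_mem [simp]: "x \<in> S \<Longrightarrow> y \<in> S \<Longrightarrow> x + y \<in> S"
  and diff_mem [simp]: "x \<in> S \<Longrightarrow> y \<in> S \<Longrightarrow> x - y \<in> S"
  and mult_mem [simp]: "x \<in> S \<Longrightarrow> y \<in> S \<Longrightarrow> x * y \<in> S"
  using is_subring by (auto simp: is_subring_def)

lemma uminus_mem [simp]: "x \<in> S \<Longrightarrow> - x \<in> S"
  using diff_mem[OF zero_mem, of x] by simp

lemma of_nat_mem [simp]: "of_nat n \<in> S"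
  by (induction n) auto

lemma of_int_mem [simp]: "of_int k \<in> S"
  by (cases k rule: int_cases) (simp, metis of_int_of_nat_eq of_int_minus uminus_mem of_nat_mem)

lemma numeral_mem [simp]: "numeral n \<in> S"
  using of_nat_mem[of "numeral n"] by simp

lemma of_bool_mem [simp]: "of_bool P \<in> S"
  by (cases P) simp_all

end

lemma ideal_inI:
  assumes "I \<subseteq> S" "0 \<in> I" "\<And>x y. x \<in> I \<Longrightarrow> y \<in> I \<Longrightarrow> x + y \<in> I"
    "\<And>x y. x \<in> I \<Longrightarrow> y \<in> I \<Longrightarrow> x - y \<in> I"
    "\<And>s x. s \<in> S \<Longrightarrow> x \<in> I \<Longrightarrow> s * x \<in> I"
  shows "ideal_in S I"
  using assms by (auto simp: ideal_in_def)

locale ring_ideal = subring +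
  fixes I :: "'a::comm_ring_1 set"
  assumes is_ideal: "ideal_in S I"
begin

lemma ideal_subset: "x \<in> I \<Longrightarrow> x \<in> S"
  using is_ideal by (auto simp: ideal_in_def)

lemma ideal_zero [simp]: "0 \<in> I"
  and ideal_add [simp]: "x \<in> I \<Longrightarrow> y \<in> I \<Longrightarrow> x + y \<in> I"
  and ideal_diff [simp]: "x \<in> I \<Longrightarrow> y \<in> I \<Longrightarrow> x - y \<in> I"
  and ideal_mult_left [simp]: "s \<in> S \<Longrightarrow> x \<in> I \<Longrightarrow> s * x \<in> I"
  and ideal_mult_right [simp]: "s \<in> S \<Longrightarrow> x \<in> I \<Longrightarrow> x * s \<in> I"
  using is_ideal by (auto simp: ideal_in_def mult.commute)

lemma ideal_uminus [simp]: "x \<in> I \<Longrightarrow> - x \<in> I"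
  using ideal_diff[OF ideal_zero, of x] by simp

lemma ideal_sum: "(\<And>a. a \<in> A \<Longrightarrow> f a \<in> I) \<Longrightarrow> sum f A \<in> I"
  by (induction A rule: infinite_finite_induct) auto

lemma notin_ideal_if_diff_mem: "x - y \<in> I \<Longrightarrow> y \<notin> I \<Longrightarrow> x \<notin> I"
  using ideal_diff[of x "x - y"] by auto

lemma one_mem_ideal_iff: "1 \<in> I \<longleftrightarrow> I = S"
  using ideal_mult_right[of _ 1] ideal_subset by auto

lemma coset_eq_iff:
  assumes "x \<in> S" "y \<in> S"
  shows "(\<lambda>m. x + m) ` I = (\<lambda>m. y + m) ` I \<longleftrightarrow> x - y \<in> I"
proof
  assume "(\<lambda>m. x + m) ` I = (\<lambda>m. y + m) ` I"
  then obtain m where "m \<in> I" "x + 0 = y + m" by (metis ideal_zero image_iff)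
  then show "x - y \<in> I" by (simp add: algebra_simps)
next
  assume xy: "x - y \<in> I"
  show "(\<lambda>m. x + m) ` I = (\<lambda>m. y + m) ` I"
  proof (intro equalityI image_subsetI)
    fix m assume "m \<in> I"
    have "x + m = y + ((x - y) + m)" "y + m = x + (m - (x - y))"
      by (simp_all add: algebra_simps)
    with xy \<open>m \<in> I\<close> show "x + m \<in> (\<lambda>m. y + m) ` I" "y + m \<in> (\<lambda>m. x + m) ` I"
      by (metis ideal_add ideal_diff imageI)+
  qed
qed

lemma card_residue_ring_eq_2_iff:
  assumes "I \<noteq> S"
  shows "card (residue_ring S I) = 2 \<longleftrightarrow> (\<forall>x\<in>S. x \<in> I \<or> x - 1 \<in> I)"
proof -
  let ?coset = "\<lambda>x. (\<lambda>m. x + m) ` I"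
  have "0 - 1 \<notin> I"
    using ideal_uminus[of "0 - 1"] one_mem_ideal_iff assms by auto
  then have distinct: "?coset 0 \<noteq> ?coset 1"
    using coset_eq_iff[OF zero_mem one_mem] by blast
  have mem: "?coset 0 \<in> residue_ring S I" "?coset 1 \<in> residue_ring S I"
    unfolding residue_ring_def by (rule imageI, simp)+
  show ?thesis
  proof
    assume card: "card (residue_ring S I) = 2"
    then have "finite (residue_ring S I)"
      by (intro card_ge_0_finite) simp
    then have "residue_ring S I = {?coset 0, ?coset 1}"
      using card distinct mem by (intro card_subset_eq[symmetric]) auto
    show "\<forall>x\<in>S. x \<in> I \<or> x - 1 \<in> I"
    proof
      fix x assume "x \<in> S"
      then have "?coset x \<in> residue_ring S I"
        unfolding residue_ring_def by (rule imageI)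
      then have "?coset x = ?coset 0 \<or> ?coset x = ?coset 1"
        using \<open>residue_ring S I = _\<close> by blast
      then show "x \<in> I \<or> x - 1 \<in> I"
        using coset_eq_iff[OF \<open>x \<in> S\<close> zero_mem] coset_eq_iff[OF \<open>x \<in> S\<close> one_mem]
        by (simp only: diff_zero)
    qed
  next
    assume F2: "\<forall>x\<in>S. x \<in> I \<or> x - 1 \<in> I"
    have "?coset x \<in> {?coset 0, ?coset 1}" if "x \<in> S" for x
      using F2 coset_eq_iff[OF that zero_mem] coset_eq_iff[OF that one_mem] that
      by (simp only: diff_zero insert_iff) blast
    then have "residue_ring S I = {?coset 0, ?coset 1}"
      using mem unfolding residue_ring_def by blast
    then show "card (residue_ring S I) = 2"
      using distinct by simp
  qed
qed

end

section \<open>Maximal ideals and local rings\<close>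

lemma maximal_ideal_ring_ideal:
  "is_subring S \<Longrightarrow> maximal_ideal_in S M \<Longrightarrow> ring_ideal S M"
  by unfold_locales (simp_all add: maximal_ideal_in_def)

lemma one_notin_maximal_ideal:
  assumes "is_subring S" "maximal_ideal_in S M"
  shows "1 \<notin> M"
proof -
  interpret ring_ideal S M using maximal_ideal_ring_ideal[OF assms] .
  show ?thesis using one_mem_ideal_iff assms(2) by (simp add: maximal_ideal_in_def)
qed

lemma ideal_chain_Union:
  assumes C: "C \<in> chains A" and "\<And>J. J \<in> A \<Longrightarrow> ideal_in S J" and ne: "C \<noteq> {}"
  shows "ideal_in S (\<Union>C)"
proof -
  have ideals: "\<And>J. J \<in> C \<Longrightarrow> ideal_in S J" using chainsD2[OF C] assms(2) by blast
  have common: "\<exists>J\<in>C. x \<in> J \<and> y \<in> J" if "x \<in> \<Union>C" "y \<in> \<Union>C" for x y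
    using that chainsD[OF C] by blast
  show ?thesis
  proof (rule ideal_inI)
    show "\<Union>C \<subseteq> S" using ideals unfolding ideal_in_def by blast
    show "0 \<in> \<Union>C" using ideals ne by (auto simp: ideal_in_def)
  next
    fix x y assume "x \<in> \<Union>C" "y \<in> \<Union>C"
    then obtain J where "J \<in> C" "x \<in> J" "y \<in> J" using common by blast
    then show "x + y \<in> \<Union>C" "x - y \<in> \<Union>C"
      using ideals[OF \<open>J \<in> C\<close>] unfolding ideal_in_def by blast+
  next
    fix s x assume "s \<in> S" "x \<in> \<Union>C"
    then obtain J where "J \<in> C" "x \<in> J" by blast
    then show "s * x \<in> \<Union>C"
      using ideals[OF \<open>J \<in> C\<close>] \<open>s \<in> S\<close> unfolding ideal_in_def by blast
  qed
qed

lemma exists_maximal_ideal: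
  assumes S: "is_subring S" and I: "ideal_in S I" and "1 \<notin> I"
  shows "\<exists>P. maximal_ideal_in S P \<and> I \<subseteq> P"
proof -
  let ?A = "{J. ideal_in S J \<and> I \<subseteq> J \<and> 1 \<notin> J}"
  have "\<forall>C\<in>chains ?A. \<exists>U\<in>?A. \<forall>J\<in>C. J \<subseteq> U"
  proof
    fix C assume C: "C \<in> chains ?A"
    show "\<exists>U\<in>?A. \<forall>J\<in>C. J \<subseteq> U"
    proof (cases "C = {}")
      case True then show ?thesis using I \<open>1 \<notin> I\<close> by blast
    next
      case False
      then have "\<Union>C \<in> ?A"
        using ideal_chain_Union[OF C _ False] chainsD2[OF C] by blast
      then show ?thesis by blast
    qed
  qed
  from Zorn_Lemma2[OF this] obtain P
    where P: "P \<in> ?A" "\<forall>J\<in>?A. P \<subseteq> J \<longrightarrow> J = P" ..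
  have "maximal_ideal_in S P"
    unfolding maximal_ideal_in_def
  proof (intro conjI allI impI)
    interpret subring S using S by unfold_locales
    show "ideal_in S P" using P(1) by blast
    show "P \<noteq> S" using P(1) one_mem by blast
    fix J assume J: "ideal_in S J \<and> P \<subseteq> J"
    then interpret ring_ideal S J by unfold_locales simp
    show "J = P \<or> J = S"
    proof (cases "1 \<in> J")
      case True then show ?thesis using one_mem_ideal_iff by blast
    next
      case False then show ?thesis using P J by blast
    qed
  qed
  with P(1) show ?thesis by blast
qed

lemma ideal_add_principal:
  assumes "is_subring S" "ideal_in S N" "m \<in> S"
  shows "ideal_in S {p + s * m | p s. p \<in> N \<and> s \<in> S}" (is "ideal_in S ?K")
proof -
  interpret ring_ideal S N using assms by unfold_locales
  have K: "x \<in> ?K \<longleftrightarrow> (\<exists>p\<in>N. \<exists>s\<in>S. x = p + s * m)" for x by blast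
  show ?thesis
  proof (rule ideal_inI)
    show "?K \<subseteq> S" using \<open>m \<in> S\<close> ideal_subset by auto
    show "0 \<in> ?K" unfolding K by (intro bexI[of _ 0]) auto
  next
    fix x y assume "x \<in> ?K" "y \<in> ?K"
    then obtain p s p' s' where ps: "p \<in> N" "s \<in> S" "p' \<in> N" "s' \<in> S"
      and "x = p + s * m" "y = p' + s' * m" unfolding K by blast
    then have "x + y = (p + p') + (s + s') * m" "x - y = (p - p') + (s - s') * m"
      by (simp_all add: algebra_simps)
    with ps show "x + y \<in> ?K" "x - y \<in> ?K" unfolding K by (meson add_mem diff_mem ideal_add ideal_diff)+
  next
    fix t x assume "t \<in> S" "x \<in> ?K"
    then obtain p s where ps: "p \<in> N" "s \<in> S" and "x = p + s * m" unfolding K by blast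
    then have "t * x = t * p + (t * s) * m" by (simp add: algebra_simps)
    with ps \<open>t \<in> S\<close> show "t * x \<in> ?K" unfolding K by (meson mult_mem ideal_mult_left)
  qed
qed

lemma unit_if_notin_maximal_ideals:
  assumes S: "is_subring S" and x: "x \<in> S" and notin: "\<And>P. maximal_ideal_in S P \<Longrightarrow> x \<notin> P"
  shows "\<exists>y\<in>S. x * y = 1"
proof (rule ccontr)
  assume no_inverse: "\<not> ?thesis"
  interpret subring S using S by unfold_locales
  let ?I = "{p + s * x | p s. p \<in> {0} \<and> s \<in> S}"
  have "ideal_in S {0}" by (auto simp: ideal_in_def)
  then have "ideal_in S ?I" using ideal_add_principal[OF S _ x] by blast
  moreover have "1 \<notin> ?I" using no_inverse by (auto simp: mult.commute)
  ultimately obtain P where "maximal_ideal_in S P" "?I \<subseteq> P"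
    using exists_maximal_ideal[OF S] by blast
  moreover have "x \<in> ?I" by (auto intro!: exI[of _ 1])
  ultimately show False using notin by blast
qed

lemma maximal_ideal_comaximal:
  assumes S: "is_subring S" and N: "maximal_ideal_in S N" and m: "m \<in> S" "m \<notin> N"
  shows "\<exists>p\<in>N. \<exists>s\<in>S. 1 = p + s * m"
proof -
  interpret ring_ideal S N using maximal_ideal_ring_ideal[OF S N] .
  let ?K = "{p + s * m | p s. p \<in> N \<and> s \<in> S}"
  have "ideal_in S ?K" using ideal_add_principal[OF S is_ideal m(1)] .
  moreover have "N \<subseteq> ?K" by (force intro: exI[of _ 0])
  moreover have "m \<in> ?K" by (force intro: exI[of _ 0] exI[of _ 1])
  ultimately have "?K = S" using N m(2) unfolding maximal_ideal_in_def by blast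
  then show ?thesis using one_mem by blast
qed

lemma exists_separating_element:
  assumes S: "is_subring S" and A: "maximal_ideal_in S A" and B: "maximal_ideal_in S B"
    and C: "maximal_ideal_in S C" and "A \<noteq> B" "A \<noteq> C"
  shows "\<exists>e\<in>S. e \<in> B \<and> e \<in> C \<and> e - 1 \<in> A"
proof -
  interpret subring S using S by unfold_locales
  interpret A: ring_ideal S A using maximal_ideal_ring_ideal[OF S A] .
  interpret B: ring_ideal S B using maximal_ideal_ring_ideal[OF S B] .
  interpret C: ring_ideal S C using maximal_ideal_ring_ideal[OF S C] .
  have "\<exists>u\<in>N. u - 1 \<in> A" if N: "maximal_ideal_in S N" "A \<noteq> N" for N
  proof -
    interpret N: ring_ideal S N using maximal_ideal_ring_ideal[OF S N(1)] .
    have "N \<noteq> S" using N(1) by (simp add: maximal_ideal_in_def)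
    then have "\<not> N \<subseteq> A"
      using A N N.is_ideal unfolding maximal_ideal_in_def by metis
    then obtain b where b: "b \<in> N" "b \<notin> A" by blast
    then obtain p s where ps: "p \<in> A" "s \<in> S" "1 = p + s * b"
      using maximal_ideal_comaximal[OF S A N.ideal_subset] by blast
    then have "s * b - 1 = - p" by (simp add: algebra_simps)
    then show ?thesis using ps b by (intro bexI[of _ "s * b"]) simp_all
  qed
  then obtain u v where u: "u \<in> B" "u - 1 \<in> A" and v: "v \<in> C" "v - 1 \<in> A"
    using assms by metis
  have "u * v - 1 = (u - 1) * v + (v - 1)" by (simp add: algebra_simps)
  moreover have "(u - 1) * v + (v - 1) \<in> A"
    using u v C.ideal_subset by simp
  ultimately have "u * v - 1 \<in> A" by (simp only:)
  moreover have "u * v \<in> S" "u * v \<in> B" "u * v \<in> C"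
    using u v B.ideal_subset C.ideal_subset by simp_all
  ultimately show ?thesis by blast
qed

lemma local_ring_maximal_ideal_eq:
  assumes "local_ring R" "maximal_ideal_in R M" "maximal_ideal_in R P"
  shows "P = M"
  using assms unfolding local_ring_def by blast

lemma local_ring_Jac:
  assumes "local_ring R" "maximal_ideal_in R M"
  shows "Jac R = M"
proof -
  have "{P. maximal_ideal_in R P} = {M}"
    using assms local_ring_maximal_ideal_eq[OF assms] by blast
  then show ?thesis by (simp add: Jac_def)
qed

lemma local_ring_unit:
  assumes "local_ring R" "maximal_ideal_in R M" "x \<in> R" "x \<notin> M"
  shows "\<exists>y\<in>R. x * y = 1"
proof (rule unit_if_notin_maximal_ideals)
  show "is_subring R" using assms(1) by (simp add: local_ring_def)
  show "x \<notin> P" if "maximal_ideal_in R P" for P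
    using local_ring_maximal_ideal_eq[OF assms(1,2) that] assms(4) by simp
qed fact

section \<open>The sequence R_i\<close>

lemma Jac_zero: "0 \<in> Jac A"
  and Jac_add: "x \<in> Jac A \<Longrightarrow> y \<in> Jac A \<Longrightarrow> x + y \<in> Jac A"
  and Jac_diff: "x \<in> Jac A \<Longrightarrow> y \<in> Jac A \<Longrightarrow> x - y \<in> Jac A"
  unfolding Jac_def by (auto simp: maximal_ideal_in_def ideal_in_def)

lemma Endo_subring:
  assumes "0 \<in> I" "\<And>x y. x \<in> I \<Longrightarrow> y \<in> I \<Longrightarrow> x + y \<in> I"
    "\<And>x y. x \<in> I \<Longrightarrow> y \<in> I \<Longrightarrow> x - y \<in> I"
  shows "is_subring (Endo I)"
  using assms unfolding is_subring_def Endo_def by (simp add: algebra_simps)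

lemma ideal_Endo_subring: "ideal_in S I \<Longrightarrow> is_subring (Endo I)"
  by (rule Endo_subring) (simp_all add: ideal_in_def)

lemma subset_Endo_ideal: "ideal_in S I \<Longrightarrow> S \<subseteq> Endo I"
  unfolding Endo_def ideal_in_def by blast

lemma subset_Endo_Jac: "A \<subseteq> Endo (Jac A)"
proof
  fix a assume a: "a \<in> A"
  show "a \<in> Endo (Jac A)" unfolding Endo_def Jac_def
  proof (intro CollectI ballI InterI)
    fix x P assume "x \<in> \<Inter>{M. maximal_ideal_in A M}" "P \<in> {M. maximal_ideal_in A M}"
    then have "x \<in> P" "ideal_in A P" by (auto simp: maximal_ideal_in_def)
    then show "a * x \<in> P" using a by (simp add: ideal_in_def)
  qed
qed

lemma Rseq_subring: "is_subring R \<Longrightarrow> is_subring (Rseq R i)"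
  by (cases i) (simp_all add: Endo_subring Jac_zero Jac_add Jac_diff)

lemma Rseq_mono: "i \<le> j \<Longrightarrow> Rseq R i \<subseteq> Rseq R j"
proof (induction j)
  case (Suc j)
  then show ?case
    using subset_Endo_Jac[of "Rseq R j"] by (auto simp: le_Suc_eq)
qed simp

lemma Rinf_subring:
  assumes R: "is_subring R"
  shows "is_subring (Rinf R)"
proof -
  have common: "\<exists>k\<ge>1. x \<in> Rseq R k \<and> y \<in> Rseq R k" if xy: "x \<in> Rinf R" "y \<in> Rinf R" for x y
  proof -
    obtain i j where "i \<ge> 1" "j \<ge> 1" "x \<in> Rseq R i" "y \<in> Rseq R j"
      using xy unfolding Rinf_def by blast
    then show ?thesis
      using Rseq_mono[of i "max i j" R] Rseq_mono[of j "max i j" R]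
      by (intro exI[of _ "max i j"]) auto
  qed
  have closed: "x + y \<in> Rinf R \<and> x - y \<in> Rinf R \<and> x * y \<in> Rinf R"
    if xy: "x \<in> Rinf R" "y \<in> Rinf R" for x y
  proof -
    obtain k where k: "k \<ge> 1" "x \<in> Rseq R k" "y \<in> Rseq R k" using common[OF xy] by blast
    then have "x + y \<in> Rseq R k \<and> x - y \<in> Rseq R k \<and> x * y \<in> Rseq R k"
      using Rseq_subring[OF R, of k] unfolding is_subring_def by blast
    then show ?thesis using k(1) unfolding Rinf_def by blast
  qed
  have "0 \<in> Rseq R 1" "1 \<in> Rseq R 1"
    using Rseq_subring[OF R, of 1] unfolding is_subring_def by blast+
  then have "0 \<in> Rinf R" "1 \<in> Rinf R" unfolding Rinf_def by blast+
  with closed show ?thesis unfolding is_subring_def by blast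
qed

lemma subset_Rinf: "R \<subseteq> Rinf R"
  using Rseq_mono[of 0 1 R] unfolding Rinf_def by (intro subsetI UN_I[of 1]) auto

lemma Rseq_one_subset_Rinf: "Rseq R 1 \<subseteq> Rinf R"
  unfolding Rinf_def by blast

lemma Rinf_eq_Rseq_one:
  assumes Jac_eq: "Jac (Rseq R 1) = Jac R"
  shows "Rinf R = Rseq R 1"
proof -
  have "Rseq R i = Rseq R 1" if "i \<ge> 1" for i
    using that
  proof (induction i)
    case (Suc i)
    then show ?case using Jac_eq by (cases "i = 0") simp_all
  qed simp
  then show ?thesis unfolding Rinf_def by (auto simp: atLeast_def)
qed

section \<open>Quadratic extensions of a local ring\<close>

locale quadratic_local_ext =
  fixes R M T :: "'a::comm_ring_1 set"
  assumes local: "local_ring R" and maximal: "maximal_ideal_in R M"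
    and subring_T: "is_subring T" and quadratic: "quadratic_ext R T"
begin

lemma subring_R: "is_subring R"
  using local by (simp add: local_ring_def)

sublocale R: subring R using subring_R by unfold_locales
sublocale T: subring T using subring_T by unfold_locales
sublocale M: ring_ideal R M using maximal_ideal_ring_ideal[OF subring_R maximal] .

lemma R_subset_T [simp]: "x \<in> R \<Longrightarrow> x \<in> T"
  using quadratic by (auto simp: quadratic_ext_def)

lemma M_subset_R [simp]: "x \<in> M \<Longrightarrow> x \<in> R"
  using M.ideal_subset .

lemma one_notin_M: "1 \<notin> M"
  using one_notin_maximal_ideal[OF subring_R maximal] .

lemma maximal_ideal_T: "maximal_ideal_in T N \<Longrightarrow> ring_ideal T N"
  using maximal_ideal_ring_ideal[OF subring_T] .

lemma quadratic_relation: "x \<in> T \<Longrightarrow> y \<in> T \<Longrightarrow> \<exists>a\<in>R. \<exists>b\<in>R. \<exists>c\<in>R. x * y = a * x + b * y + c"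
  using quadratic by (simp add: quadratic_ext_def)

lemma square_relation:
  assumes "x \<in> T"
  obtains a c where "a \<in> R" "c \<in> R" "x * x = a * x + c"
proof -
  obtain a b c where "a \<in> R" "b \<in> R" "c \<in> R" "x * x = a * x + b * x + c"
    using quadratic_relation[OF assms assms] by blast
  then show ?thesis by (intro that[of "a + b" c]) (simp_all add: algebra_simps)
qed

lemma maximal_ideal_Int_R_subset:
  assumes N: "maximal_ideal_in T N" and "r \<in> R" "r \<in> N"
  shows "r \<in> M"
proof (rule ccontr)
  interpret N: ring_ideal T N using maximal_ideal_T[OF N] .
  assume "r \<notin> M"
  then obtain y where "y \<in> R" "r * y = 1"
    using local_ring_unit[OF local maximal \<open>r \<in> R\<close>] by blast
  then have "1 \<in> N" using \<open>r \<in> N\<close> N.ideal_mult_right[of y r] by simp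
  then show False using one_notin_maximal_ideal[OF subring_T N] by simp
qed

lemma M_subset_maximal_ideal:
  assumes N: "maximal_ideal_in T N" and m: "m \<in> M"
  shows "m \<in> N"
proof (rule ccontr)
  interpret N: ring_ideal T N using maximal_ideal_T[OF N] .
  assume "m \<notin> N"
  moreover have "m \<in> T" using m by simp
  ultimately obtain p t where pt: "p \<in> N" "t \<in> T" "1 = p + t * m"
    using maximal_ideal_comaximal[OF subring_T N] by blast
  obtain a c where ac: "a \<in> R" "c \<in> R" "t * t = a * t + c"
    using square_relation[OF pt(2)] .
  have "(t * m) * (t * m) = (t * t) * (m * m)" by (simp add: algebra_simps)
  also have "\<dots> = a * m * (t * m) + c * m * m" using ac(3) by (simp add: algebra_simps)
  moreover have "t * m = 1 - p" using pt(3) by (simp add: algebra_simps)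
  ultimately have "(1 - p) * (1 - p) = a * m * (1 - p) + c * m * m" by simp
  then have eq: "1 - a * m - c * m * m = p * (2 - p - a * m)"
    by (simp add: algebra_simps)
  have "1 - a * m - c * m * m \<in> N"
    unfolding eq using pt ac m N.ideal_subset by (intro N.ideal_mult_right) simp_all
  moreover have "1 - a * m - c * m * m \<in> R" using ac m by simp
  ultimately have "1 - a * m - c * m * m \<in> M"
    using maximal_ideal_Int_R_subset[OF N] by blast
  moreover have "a * m + c * m * m \<in> M" using ac m by simp
  ultimately have "(1 - a * m - c * m * m) + (a * m + c * m * m) \<in> M" by (rule M.ideal_add)
  then show False using one_notin_M by simp
qed

lemma mem_maximal_ideal_iff:
  "maximal_ideal_in T N \<Longrightarrow> r \<in> R \<Longrightarrow> r \<in> N \<longleftrightarrow> r \<in> M"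
  using maximal_ideal_Int_R_subset M_subset_maximal_ideal by blast

lemma square_relation_const_mem:
  assumes N: "maximal_ideal_in T N" and "x \<in> N"
    and ac: "a \<in> R" "c \<in> R" "x * x = a * x + c"
  shows "c \<in> M"
proof -
  interpret N: ring_ideal T N using maximal_ideal_T[OF N] .
  have "c = x * (x - a)" using ac(3) by (simp add: algebra_simps)
  moreover have "x * (x - a) \<in> N"
    using \<open>x \<in> N\<close> ac N.ideal_subset by (intro N.ideal_mult_right) simp_all
  ultimately have "c \<in> N" by (simp only:)
  with mem_maximal_ideal_iff[OF N ac(2)] show ?thesis by blast
qed

lemma square_relation_coeff_mem:
  assumes N: "maximal_ideal_in T N" and N': "maximal_ideal_in T N'"
    and "x \<in> N" "x - 1 \<in> N'" and ac: "a \<in> R" "c \<in> R" "x * x = a * x + c"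
  shows "a - 1 \<in> M"
proof -
  interpret N: ring_ideal T N using maximal_ideal_T[OF N] .
  interpret N': ring_ideal T N' using maximal_ideal_T[OF N'] .
  have "c \<in> N'"
    using square_relation_const_mem[OF N \<open>x \<in> N\<close> ac] mem_maximal_ideal_iff[OF N' ac(2)] by blast
  have "a - 1 = (x - 1) * (x + 1 - a) - c" using ac(3) by (simp add: algebra_simps)
  moreover have "(x - 1) * (x + 1 - a) - c \<in> N'"
    using \<open>x - 1 \<in> N'\<close> \<open>c \<in> N'\<close> \<open>x \<in> N\<close> N.ideal_subset ac by simp
  ultimately have "a - 1 \<in> N'" by (simp only:)
  then show ?thesis using mem_maximal_ideal_iff[OF N'] ac by simp
qed

lemma residue_representative:
  assumes A: "maximal_ideal_in T A" and B: "maximal_ideal_in T B" and C: "maximal_ideal_in T C"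
    and "A \<noteq> B" "A \<noteq> C" "B \<noteq> C" and x: "x \<in> T"
  shows "\<exists>a\<in>R. x - a \<in> A"
proof -
  interpret A: ring_ideal T A using maximal_ideal_T[OF A] .
  interpret B: ring_ideal T B using maximal_ideal_T[OF B] .
  interpret C: ring_ideal T C using maximal_ideal_T[OF C] .
  obtain e1 where e1: "e1 \<in> T" "e1 \<in> B" "e1 \<in> C" "e1 - 1 \<in> A"
    using exists_separating_element[OF subring_T A B C] assms by blast
  obtain e2 where e2: "e2 \<in> T" "e2 \<in> A" "e2 \<in> C" "e2 - 1 \<in> B"
    using exists_separating_element[OF subring_T B A C] assms by metis
  define y where "y = x * e1 + e2"
  have y: "y \<in> T" "y \<in> C" unfolding y_def using x e1 e2 by simp_all
  have "y - 1 = x * e1 + (e2 - 1)" unfolding y_def by simp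
  moreover have "x * e1 + (e2 - 1) \<in> B" using x e1 e2 by simp
  ultimately have y1: "y - 1 \<in> B" by (simp only:)
  obtain a b c where abc: "a \<in> R" "b \<in> R" "c \<in> R" "e1 * y = a * e1 + b * y + c"
    using quadratic_relation[OF e1(1) y(1)] by blast
  have "c = e1 * y - a * e1 - b * y" using abc(4) by (simp add: algebra_simps)
  moreover have "e1 * y - a * e1 - b * y \<in> C" using e1 y abc(1-3) by simp
  ultimately have "c \<in> C" by (simp only:)
  then have c: "c \<in> M" using mem_maximal_ideal_iff[OF C abc(3)] by blast
  have "b = e1 * y - a * e1 - b * (y - 1) - c" using abc(4) by (simp add: algebra_simps)
  moreover have "e1 * y - a * e1 - b * (y - 1) - c \<in> B"
    using e1 y y1 abc(1-3) c mem_maximal_ideal_iff[OF B] by simp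
  ultimately have "b \<in> B" by (simp only:)
  then have b: "b \<in> M" using mem_maximal_ideal_iff[OF B abc(2)] by blast
  have "x - a = (b * y + c) - e1 * e2 + (e1 - 1) * (a - x * (e1 + 1))"
    using abc(4) unfolding y_def by (simp add: algebra_simps)
  moreover have "(b * y + c) - e1 * e2 + (e1 - 1) * (a - x * (e1 + 1)) \<in> A"
    using x e1 e2 y abc(1-3) b c mem_maximal_ideal_iff[OF A] by simp
  ultimately have "x - a \<in> A" by (simp only:)
  with abc(1) show ?thesis by blast
qed

lemma base_residue_two:
  assumes A: "maximal_ideal_in T A" and B: "maximal_ideal_in T B" and C: "maximal_ideal_in T C"
    and "A \<noteq> B" "A \<noteq> C" "B \<noteq> C" and r: "r \<in> R"
  shows "r \<in> M \<or> r - 1 \<in> M"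
proof (rule ccontr)
  assume neither: "\<not> (r \<in> M \<or> r - 1 \<in> M)"
  interpret A: ring_ideal T A using maximal_ideal_T[OF A] .
  interpret B: ring_ideal T B using maximal_ideal_T[OF B] .
  interpret C: ring_ideal T C using maximal_ideal_T[OF C] .
  obtain e2 where e2: "e2 \<in> T" "e2 \<in> A" "e2 \<in> C" "e2 - 1 \<in> B"
    using exists_separating_element[OF subring_T B A C] assms by metis
  obtain e3 where e3: "e3 \<in> T" "e3 \<in> A" "e3 \<in> B" "e3 - 1 \<in> C"
    using exists_separating_element[OF subring_T C A B] assms by metis
  define x where "x = e2 + r * e3"
  have x: "x \<in> T" "x \<in> A" unfolding x_def using e2 e3 r by simp_all
  have "x - 1 = (e2 - 1) + r * e3" "x - r = e2 + r * (e3 - 1)"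
    unfolding x_def by (simp_all add: algebra_simps)
  moreover have "(e2 - 1) + r * e3 \<in> B" "e2 + r * (e3 - 1) \<in> C"
    using e2 e3 r by simp_all
  ultimately have x1: "x - 1 \<in> B" and xr: "x - r \<in> C" by (simp_all only:)
  obtain a c where ac: "a \<in> R" "c \<in> R" "x * x = a * x + c"
    using square_relation[OF x(1)] .
  have c: "c \<in> M" using square_relation_const_mem[OF A x(2) ac] .
  have a1: "a - 1 \<in> M" using square_relation_coeff_mem[OF A B x(2) x1 ac] .
  have "r * r - r = (r - x) * (r + x) + a * (x - r) + (a - 1) * r + c"
    using ac(3) by (simp add: algebra_simps)
  moreover have "(r - x) * (r + x) + a * (x - r) + (a - 1) * r + c \<in> C"
  proof -
    have "r - x \<in> C" using C.ideal_uminus[OF xr] by simp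
    then show ?thesis using xr x ac(1,2) r a1 c mem_maximal_ideal_iff[OF C] by simp
  qed
  ultimately have "r * r - r \<in> C" by (simp only:)
  then have rr: "r * r - r \<in> M" using mem_maximal_ideal_iff[OF C] r by simp
  obtain y where y: "y \<in> R" "r * y = 1"
    using local_ring_unit[OF local maximal r] neither by blast
  have "r - 1 = y * (r * r - r)" using y(2) by (simp add: algebra_simps)
  then have "r - 1 \<in> M" using rr y(1) by simp
  with neither show False by simp
qed

lemma ext_residue_two:
  assumes A: "maximal_ideal_in T A" and B: "maximal_ideal_in T B" and C: "maximal_ideal_in T C"
    and "A \<noteq> B" "A \<noteq> C" "B \<noteq> C" and x: "x \<in> T"
  shows "x \<in> A \<or> x - 1 \<in> A"
proof -
  interpret A: ring_ideal T A using maximal_ideal_T[OF A] .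
  obtain a where a: "a \<in> R" "x - a \<in> A"
    using residue_representative[OF assms] by blast
  have "x = (x - a) + a" "x - 1 = (x - a) + (a - 1)" by simp_all
  moreover have "a \<in> A \<or> a - 1 \<in> A"
    using base_residue_two[OF A B C assms(4-6) a(1)] mem_maximal_ideal_iff[OF A] a(1) by auto
  ultimately show ?thesis using a(2) by (metis A.ideal_add)
qed

lemma two_mem_M:
  assumes "maximal_ideal_in T A" "maximal_ideal_in T B" "maximal_ideal_in T C"
    and "A \<noteq> B" "A \<noteq> C" "B \<noteq> C"
  shows "2 \<in> M"
  using base_residue_two[OF assms, of 2] one_notin_M by simp

end

section \<open>Stable ideals and the ring E(M)\<close>

lemma total_quotient_ring_inverse:
  "is_total_quotient_ring R \<Longrightarrow> nonzerodivisor_in R b \<Longrightarrow> \<exists>c. b * c = 1"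
  unfolding is_total_quotient_ring_def by blast

lemma total_quotient_ring_fraction:
  "is_total_quotient_ring R \<Longrightarrow> \<exists>r\<in>R. \<exists>b. nonzerodivisor_in R b \<and> q * b = r"
  unfolding is_total_quotient_ring_def by blast

lemma stable_ideal_invertible:
  assumes I: "ideal_in S I" and "stable I" and b: "b \<in> I" "b * c = 1"
  obtains Y q where "Y \<subseteq> I" "\<And>y x. y \<in> Y \<Longrightarrow> x \<in> I \<Longrightarrow> q y * x \<in> Endo I"
    "(\<Sum>y\<in>Y. q y * y) = 1"
proof -
  obtain f where f_Endo: "\<forall>x\<in>I. \<forall>y\<in>I. f x y \<in> Endo I"
    and f_sum: "\<forall>x\<in>I. x = (\<Sum>y\<in>{y\<in>I. f x y \<noteq> 0}. f x y * y)"
    and f_linear: "\<forall>e\<in>Endo I. \<forall>x\<in>I. \<forall>y\<in>I. f (e * x) y = e * f x y"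
    using \<open>stable I\<close> unfolding stable_def projective_over_def by blast
  have I_Endo: "x \<in> Endo I" if "x \<in> I" for x
    using I that unfolding ideal_in_def Endo_def by blast
  \<comment> \<open>Comparing f (x * b) with f (b * x): each coordinate function is multiplication by c * f b y.\<close>
  have coord: "c * f b y * x = f x y" if "x \<in> I" "y \<in> I" for x y
  proof -
    have "x * f b y = b * f x y"
      using f_linear I_Endo b(1) that by (metis mult.commute)
    then have "(c * b) * f x y = c * (x * f b y)" by (simp add: algebra_simps)
    then show ?thesis using b(2) by (simp add: algebra_simps)
  qed
  let ?Y = "{y\<in>I. f b y \<noteq> 0}"
  have b_sum: "b = (\<Sum>y\<in>?Y. f b y * y)" using f_sum b(1) by blast
  have "1 = c * b" using b(2) by (simp add: mult.commute)
  also have "\<dots> = c * (\<Sum>y\<in>?Y. f b y * y)" using b_sum by (rule arg_cong)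
  also have "\<dots> = (\<Sum>y\<in>?Y. c * f b y * y)" by (simp add: sum_distrib_left mult.assoc)
  finally show ?thesis
    using f_Endo b(1) coord
    by (intro that[of ?Y "\<lambda>y. c * f b y"]) auto
qed

lemma maximal_ideal_Endo_contains:
  assumes local: "local_ring R" and M: "maximal_ideal_in R M" and P: "maximal_ideal_in (Endo M) P"
  shows "M \<subseteq> P"
proof
  fix m assume m: "m \<in> M"
  have R: "is_subring R" using local by (simp add: local_ring_def)
  interpret M: ring_ideal R M using maximal_ideal_ring_ideal[OF R M] .
  have E: "is_subring (Endo M)" using ideal_Endo_subring[OF M.is_ideal] .
  interpret P: ring_ideal "Endo M" P using maximal_ideal_ring_ideal[OF E P] .
  have R_Endo: "R \<subseteq> Endo M" using subset_Endo_ideal[OF M.is_ideal] .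
  show "m \<in> P"
  proof (rule ccontr)
    assume "m \<notin> P"
    moreover have "m \<in> Endo M" using M.ideal_subset[OF m] R_Endo by blast
    ultimately obtain p t where pt: "p \<in> P" "t \<in> Endo M" "1 = p + t * m"
      using maximal_ideal_comaximal[OF E P] by blast
    have tm: "t * m \<in> M" using pt(2) m by (simp add: Endo_def)
    then have p: "p = 1 - t * m" using pt(3) by (simp add: algebra_simps)
    have "p \<notin> M"
    proof
      assume "p \<in> M"
      then have "p + t * m \<in> M" using tm by simp
      then show False using pt(3) one_notin_maximal_ideal[OF R M] by simp
    qed
    moreover have "p \<in> R" using p tm M.ideal_subset by simp
    ultimately obtain z where z: "z \<in> R" "p * z = 1"
      using local_ring_unit[OF local M] by blast
    then have "1 \<in> P" using pt(1) R_Endo P.ideal_mult_right[of z p] by auto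
    then show False using one_notin_maximal_ideal[OF E P] by simp
  qed
qed

lemma Jac_Endo_mem_M:
  assumes local: "local_ring R" and M: "maximal_ideal_in R M"
    and n: "n \<in> Endo M" "n \<in> Jac (Endo M)" and a: "a \<in> R" "a - 1 \<in> M" and c: "c \<in> M" and sq: "n * n = a * n + c"
  shows "n \<in> M"
proof -
  have R: "is_subring R" using local by (simp add: local_ring_def)
  interpret M: ring_ideal R M using maximal_ideal_ring_ideal[OF R M] .
  have E: "is_subring (Endo M)" using ideal_Endo_subring[OF M.is_ideal] .
  interpret E: subring "Endo M" using E by unfold_locales
  have R_Endo: "R \<subseteq> Endo M" using subset_Endo_ideal[OF M.is_ideal] .
  have "n - a \<notin> P" if P: "maximal_ideal_in (Endo M) P" for P
  proof
    interpret P: ring_ideal "Endo M" P using maximal_ideal_ring_ideal[OF E P] .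
    assume "n - a \<in> P"
    moreover have "n \<in> P" using n(2) P unfolding Jac_def by blast
    ultimately have "n - (n - a) \<in> P" by (metis P.ideal_diff)
    moreover have "a - 1 \<in> P" using a(2) maximal_ideal_Endo_contains[OF local M P] by blast
    ultimately have "(n - (n - a)) - (a - 1) \<in> P" by (rule P.ideal_diff)
    then show False using one_notin_maximal_ideal[OF E P] by simp
  qed
  moreover have "n - a \<in> Endo M" using n(1) a(1) R_Endo E.diff_mem by blast
  ultimately obtain z where z: "z \<in> Endo M" "(n - a) * z = 1"
    using unit_if_notin_maximal_ideals[OF E] by blast
  have "n = z * (n * n - a * n)" using z(2) by (simp add: algebra_simps)
  also have "\<dots> = z * c" using sq by simp
  finally show ?thesis using z(1) c by (simp add: Endo_def)
qed

lemma maximal_ideal_Int_subring: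
  assumes T: "is_subring T" and E: "is_subring E" "E \<subseteq> T" and N: "ideal_in T N" "1 \<notin> N"
    and residue_two: "\<And>x. x \<in> E \<Longrightarrow> x \<in> N \<or> x - 1 \<in> N"
  shows "maximal_ideal_in E (N \<inter> E)"
proof -
  interpret subring E using E(1) by unfold_locales
  interpret N: ring_ideal T N using T N(1) by unfold_locales
  have ideal: "ideal_in E (N \<inter> E)"
  proof (rule ideal_inI)
    show "N \<inter> E \<subseteq> E" "0 \<in> N \<inter> E" by simp_all
    show "x + y \<in> N \<inter> E" "x - y \<in> N \<inter> E" if "x \<in> N \<inter> E" "y \<in> N \<inter> E" for x y
      using that by simp_all
    show "s * x \<in> N \<inter> E" if "s \<in> E" "x \<in> N \<inter> E" for s x
      using that E(2) N.ideal_mult_left[of s x] by auto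
  qed
  show ?thesis
    unfolding maximal_ideal_in_def
  proof (intro conjI allI impI ideal)
    show "N \<inter> E \<noteq> E" using N(2) one_mem by (metis Int_iff)
    fix J assume J: "ideal_in E J \<and> N \<inter> E \<subseteq> J"
    interpret J: ring_ideal E J using J by unfold_locales simp
    show "J = N \<inter> E \<or> J = E"
    proof (cases "J \<subseteq> N")
      case True
      then have "J \<subseteq> N \<inter> E" using J.ideal_subset by blast
      then show ?thesis using J by (simp add: subset_antisym)
    next
      case False
      then obtain x where x: "x \<in> J" "x \<notin> N" by blast
      have "x \<in> E" using J.ideal_subset x(1) .
      then have "x - 1 \<in> N \<inter> E" using residue_two[of x] x(2) by simp
      then have "x - 1 \<in> J" using J by blast
      then have "x - (x - 1) \<in> J" by (rule J.ideal_diff[OF x(1)])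
      then have "1 \<in> J" by simp
      then show ?thesis using J.one_mem_ideal_iff by blast
    qed
  qed
qed

context quadratic_local_ext
begin

lemma Endo_M_subring: "is_subring (Endo M)"
  using ideal_Endo_subring[OF M.is_ideal] .

lemma Endo_M_mult: "e \<in> Endo M \<Longrightarrow> m \<in> M \<Longrightarrow> e * m \<in> M"
  by (simp add: Endo_def)

lemma exists_M_combination_eq_mult:
  assumes N1: "maximal_ideal_in T N1" and N2: "maximal_ideal_in T N2" and N3: "maximal_ideal_in T N3"
    and e2: "e2 \<in> T" "e2 \<in> N1" "e2 \<in> N3" "e2 - 1 \<in> N2"
    and e3: "e3 \<in> T" "e3 \<in> N1" "e3 \<in> N2" "e3 - 1 \<in> N3" and m: "m \<in> M"
  obtains d d' w where "d \<in> M" "d' \<in> M" "w \<in> T" "w \<in> N1" "w - 1 \<in> N2"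
    "d * e3 + d' = m * w"
proof -
  interpret N2: ring_ideal T N2 using maximal_ideal_T[OF N2] .
  interpret N3: ring_ideal T N3 using maximal_ideal_T[OF N3] .
  interpret N1: ring_ideal T N1 using maximal_ideal_T[OF N1] .
  define x where "x = m * e2 + e3"
  have x: "x \<in> T" "x \<in> N1" unfolding x_def using m e2 e3 by simp_all
  have "x - 1 = m * e2 + (e3 - 1)" unfolding x_def by simp
  moreover have "m * e2 + (e3 - 1) \<in> N3" using m e2 e3 by simp
  ultimately have x1: "x - 1 \<in> N3" by (simp only:)
  obtain a c where ac: "a \<in> R" "c \<in> R" "x * x = a * x + c"
    using square_relation[OF x(1)] .
  obtain a' c' where ac': "a' \<in> R" "c' \<in> R" "e3 * e3 = a' * e3 + c'"
    using square_relation[OF e3(1)] .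
  have a1: "a - 1 \<in> M" using square_relation_coeff_mem[OF N1 N3 x(2) x1 ac] .
  have d: "a' - a \<in> M"
    using square_relation_coeff_mem[OF N1 N3 e3(2) e3(4) ac'] a1 M.ideal_diff by fastforce
  have d': "c' - c \<in> M"
    using square_relation_const_mem[OF N1 x(2) ac] square_relation_const_mem[OF N1 e3(2) ac'] by simp
  define w where "w = a * e2 - m * e2 * e2 - 2 * e2 * e3"
  have w: "w \<in> T" "w \<in> N1" unfolding w_def using ac e2 e3 m by simp_all
  have "w - 1 = a * (e2 - 1) + (a - 1) - m * e2 * e2 - 2 * e2 * e3"
    unfolding w_def by (simp add: algebra_simps)
  moreover have "a * (e2 - 1) + (a - 1) - m * e2 * e2 - 2 * e2 * e3 \<in> N2"
    using ac(1) e2 e3 a1 m M_subset_maximal_ideal[OF N2] by simp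
  ultimately have w1: "w - 1 \<in> N2" by (simp only:)
  have "(a' - a) * e3 + (c' - c) = m * w"
    using ac(3) ac'(3) unfolding w_def x_def by (simp add: algebra_simps)
  with d d' w w1 show ?thesis by (rule that)
qed

text \<open>The element q lives in the ambient ring and is only known to map M into E; the
  decomposition above lets it act on elements of M only.\<close>
lemma mult_mem_maximal_ideal_if_Int_subset:
  assumes N1: "maximal_ideal_in T N1" and N2: "maximal_ideal_in T N2" and N3: "maximal_ideal_in T N3"
    and "N1 \<noteq> N2" "N1 \<noteq> N3" "N2 \<noteq> N3" and "E \<subseteq> T"
    and Int_subset: "\<And>r. r \<in> E \<Longrightarrow> r \<in> N1 \<Longrightarrow> r \<in> N2"
    and q: "\<And>x. x \<in> M \<Longrightarrow> q * x \<in> E" and m: "m \<in> M"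
  shows "q * m \<in> N2"
proof -
  interpret N1: ring_ideal T N1 using maximal_ideal_T[OF N1] .
  interpret N2: ring_ideal T N2 using maximal_ideal_T[OF N2] .
  have qT: "x \<in> M \<Longrightarrow> q * x \<in> T" for x using q \<open>E \<subseteq> T\<close> by blast
  obtain e2 where e2: "e2 \<in> T" "e2 \<in> N1" "e2 \<in> N3" "e2 - 1 \<in> N2"
    using exists_separating_element[OF subring_T N2 N1 N3] assms by metis
  obtain e3 where e3: "e3 \<in> T" "e3 \<in> N1" "e3 \<in> N2" "e3 - 1 \<in> N3"
    using exists_separating_element[OF subring_T N3 N1 N2] assms by metis
  obtain d d' w where d: "d \<in> M" "d' \<in> M" and w: "w \<in> T" "w \<in> N1" "w - 1 \<in> N2"
    and eq: "d * e3 + d' = m * w"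
    using exists_M_combination_eq_mult[OF N1 N2 N3 e2 e3 m] .
  have qw: "(q * d) * e3 + q * d' = (q * m) * w"
    using eq by (metis distrib_left mult.assoc mult.left_commute)
  have "q * d' = (q * m) * w - (q * d) * e3"
    using qw by (simp add: algebra_simps)
  moreover have "(q * m) * w - (q * d) * e3 \<in> N1"
    using qT[OF m] qT[OF d(1)] w e3 by simp
  ultimately have "q * d' \<in> N2"
    using Int_subset q[OF d(2)] by simp
  moreover have "q * m = (q * m) * (1 - w) + (q * d) * e3 + q * d'"
    using qw by (simp add: algebra_simps)
  moreover have "1 - w \<in> N2" using N2.ideal_uminus[OF w(3)] by simp
  ultimately show ?thesis
    using qT[OF m] qT[OF d(1)] e3 by (metis N2.ideal_add N2.ideal_mult_left N2.ideal_mult_right)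
qed

lemma exists_Endo_separating:
  assumes N1: "maximal_ideal_in T N1" and N2: "maximal_ideal_in T N2" and N3: "maximal_ideal_in T N3"
    and "N1 \<noteq> N2" "N1 \<noteq> N3" "N2 \<noteq> N3" and "Endo M \<subseteq> T"
    and "stable M" and "b \<in> M" "b * c = 1"
  shows "\<exists>r\<in>Endo M. r \<in> N1 \<and> r \<notin> N2"
proof (rule ccontr)
  assume "\<not> ?thesis"
  then have Int_subset: "\<And>r. r \<in> Endo M \<Longrightarrow> r \<in> N1 \<Longrightarrow> r \<in> N2" by blast
  obtain Y q where Y: "Y \<subseteq> M" and q: "\<And>y x. y \<in> Y \<Longrightarrow> x \<in> M \<Longrightarrow> q y * x \<in> Endo M"
    and sum: "(\<Sum>y\<in>Y. q y * y) = 1"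
    using stable_ideal_invertible[OF M.is_ideal \<open>stable M\<close> \<open>b \<in> M\<close> \<open>b * c = 1\<close>] by metis
  interpret N2: ring_ideal T N2 using maximal_ideal_T[OF N2] .
  have "(\<Sum>y\<in>Y. q y * y) \<in> N2"
    using mult_mem_maximal_ideal_if_Int_subset[OF assms(1-7) Int_subset] q Y
    by (intro N2.ideal_sum) blast
  then show False using sum one_notin_maximal_ideal[OF subring_T N2] by simp
qed

lemma square_diff_mem_M_if_separating:
  assumes N: "maximal_ideal_in T N" and N': "maximal_ideal_in T N'"
    and r: "r \<in> Endo M" "r \<in> T" "r \<in> N" "r - 1 \<in> N'"
  shows "r * r - r \<in> M"
proof -
  obtain a c where ac: "a \<in> R" "c \<in> R" "r * r = a * r + c"
    using square_relation[OF r(2)] .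
  have "r * r - r = r * (a - 1) + c" using ac(3) by (simp add: algebra_simps)
  moreover have "r * (a - 1) + c \<in> M"
    using Endo_M_mult[OF r(1) square_relation_coeff_mem[OF N N' r(3,4) ac]]
      square_relation_const_mem[OF N r(3) ac] by simp
  ultimately show ?thesis by (simp only:)
qed

lemma mem_M_if_square_mem_M:
  assumes N1: "maximal_ideal_in T N1" and N2: "maximal_ideal_in T N2" and N3: "maximal_ideal_in T N3"
    and distinct: "N1 \<noteq> N2" "N1 \<noteq> N3" "N2 \<noteq> N3"
    and r: "r \<in> Endo M" "r \<in> T" "r \<in> N1" "r - 1 \<in> N2"
    and n: "n \<in> Endo M" "n \<in> T" "n \<in> N1" "n \<in> N2" "n * n \<in> M"
  shows "n \<in> M"
proof -
  interpret E: subring "Endo M" using Endo_M_subring by unfold_locales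
  interpret N1: ring_ideal T N1 using maximal_ideal_T[OF N1] .
  interpret N2: ring_ideal T N2 using maximal_ideal_T[OF N2] .
  have rr: "r * r - r \<in> M" using square_diff_mem_M_if_separating[OF N1 N2 r] .
  define x where "x = r + n"
  have x: "x \<in> T" "x \<in> N1" unfolding x_def using r n by simp_all
  have "x - 1 = (r - 1) + n" unfolding x_def by simp
  moreover have "(r - 1) + n \<in> N2" using r(4) n(4) by simp
  ultimately have x1: "x - 1 \<in> N2" by (simp only:)
  obtain a c where ac: "a \<in> R" "c \<in> R" "x * x = a * x + c"
    using square_relation[OF x(1)] .
  have a1: "a - 1 \<in> M" using square_relation_coeff_mem[OF N1 N2 x(2) x1 ac] .
  have c: "c \<in> M" using square_relation_const_mem[OF N1 x(2) ac] .
  have "n = (r * r - r) + 2 * (r * n) + n * n - r * (a - 1) - n * (a - 1) - c"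
    using ac(3) unfolding x_def by (simp add: algebra_simps)
  moreover have "2 * (r * n) \<in> M"
    using Endo_M_mult[of "r * n" 2] two_mem_M[OF N1 N2 N3 distinct] r(1) n(1) by (simp add: mult.commute)
  moreover have "r * (a - 1) \<in> M" "n * (a - 1) \<in> M"
    using Endo_M_mult r(1) n(1) a1 by simp_all
  ultimately show ?thesis using rr n(5) c by (metis M.ideal_add M.ideal_diff)
qed

lemma Jac_Endo_subset:
  assumes N1: "maximal_ideal_in T N1" and N2: "maximal_ideal_in T N2" and N3: "maximal_ideal_in T N3"
    and distinct: "N1 \<noteq> N2" "N1 \<noteq> N3" "N2 \<noteq> N3" and Endo_T: "Endo M \<subseteq> T"
    and r: "r \<in> Endo M" "r \<in> N1" "r \<notin> N2" and n: "n \<in> Jac (Endo M)"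
  shows "n \<in> M"
proof -
  have residue_two: "x \<in> N \<or> x - 1 \<in> N" if "N \<in> {N1, N2}" "x \<in> T" for N x
    using that ext_residue_two[OF N1 N2 N3 distinct] ext_residue_two[OF N2 N1 N3] distinct by fastforce
  have "maximal_ideal_in (Endo M) (N \<inter> Endo M)" if "N \<in> {N1, N2}" for N
    using that residue_two Endo_T maximal_ideal_T[OF N1] maximal_ideal_T[OF N2]
      one_notin_maximal_ideal[OF subring_T N1] one_notin_maximal_ideal[OF subring_T N2]
    by (intro maximal_ideal_Int_subring[OF subring_T Endo_M_subring Endo_T])
      (auto simp: ring_ideal.is_ideal)
  then have nE: "n \<in> Endo M" and n1: "n \<in> N1" and n2: "n \<in> N2"
    using n unfolding Jac_def by blast+
  have nT: "n \<in> T" using nE Endo_T by blast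
  obtain a c where ac: "a \<in> R" "c \<in> R" "n * n = a * n + c"
    using square_relation[OF nT] .
  have c: "c \<in> M" using square_relation_const_mem[OF N1 n1 ac] .
  show "n \<in> M"
  proof (cases "a \<in> M")
    case False
    then have "a - 1 \<in> M" using base_residue_two[OF N1 N2 N3 distinct ac(1)] by blast
    then show ?thesis using Jac_Endo_mem_M[OF local maximal nE n ac(1) _ c ac(3)] by blast
  next
    case True
    have "n * n \<in> M" using ac(3) Endo_M_mult[OF nE True] c by (simp add: mult.commute)
    moreover have "r \<in> T" using r(1) Endo_T by blast
    moreover have "r - 1 \<in> N2" using residue_two[of N2 r] \<open>r \<in> T\<close> r(3) by blast
    ultimately show ?thesis
      using mem_M_if_square_mem_M[OF N1 N2 N3 distinct r(1) _ r(2) _ nE nT n1 n2] by blast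
  qed
qed

lemma Jac_Endo_eq:
  assumes "maximal_ideal_in T N1" "maximal_ideal_in T N2" "maximal_ideal_in T N3"
    and "N1 \<noteq> N2" "N1 \<noteq> N3" "N2 \<noteq> N3" and "Endo M \<subseteq> T"
    and "stable M" and "b \<in> M" "b * c = 1"
  shows "Jac (Endo M) = M"
proof
  obtain r where "r \<in> Endo M" "r \<in> N1" "r \<notin> N2"
    using exists_Endo_separating[OF assms] by blast
  then show "Jac (Endo M) \<subseteq> M"
    using Jac_Endo_subset[OF assms(1-7)] by blast
  show "M \<subseteq> Jac (Endo M)"
    unfolding Jac_def using maximal_ideal_Endo_contains[OF local maximal] by blast
qed

end

section \<open>Rings with three maximal ideals\<close>

lemma Jac_eq_Int_three:
  "{N. maximal_ideal_in T N} = {A, B, C} \<Longrightarrow> Jac T = A \<inter> B \<inter> C"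
  unfolding Jac_def by auto

lemma nonzerodivisor_if_inverse:
  "b \<in> S \<Longrightarrow> b * c = 1 \<Longrightarrow> nonzerodivisor_in S b"
  unfolding nonzerodivisor_in_def by (metis mult.left_commute mult_1_right mult_zero_right)

lemma ideal_eq_principal_if_unit:
  assumes "is_subring T" "ideal_in T A" and a: "a \<in> A"
    and b: "\<And>x. x \<in> A \<Longrightarrow> b * x \<in> T" and z: "z \<in> T" "a * b * z = 1"
  shows "A = {s * a | s. s \<in> T}"
proof
  interpret ring_ideal T A using assms(1,2) by unfold_locales
  show "A \<subseteq> {s * a | s. s \<in> T}"
  proof
    fix x assume "x \<in> A"
    have "x = (b * x * z) * a" using z(2) by (metis mult.assoc mult.commute mult_1)
    moreover have "b * x * z \<in> T" using b[OF \<open>x \<in> A\<close>] z(1) by simp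
    ultimately show "x \<in> {s * a | s. s \<in> T}" by blast
  qed
  show "{s * a | s. s \<in> T} \<subseteq> A" using a by auto
qed

lemma mult_unit_of_three:
  assumes T: "is_subring T" and max: "{N. maximal_ideal_in T N} = {A, B, C}"
    and y: "y \<in> Jac T" and q: "\<And>x. x \<in> Jac T \<Longrightarrow> q * x \<in> T" and qy: "q * y \<notin> A"
    and e1: "e1 \<in> T" "e1 \<in> B" "e1 \<in> C" "e1 - 1 \<in> A"
    and e2: "e2 \<in> T" "e2 \<in> A" "e2 \<in> C" "e2 - 1 \<in> B"
    and e3: "e3 \<in> T" "e3 \<in> A" "e3 \<in> B" "e3 - 1 \<in> C"
  shows "\<exists>z\<in>T. (y * e1 + e2 * e2 + e3 * e3) * (q * (e1 * e1) + 1) * z = 1" (is "\<exists>z\<in>T. ?u * z = 1")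
proof -
  have A: "maximal_ideal_in T A" and B: "maximal_ideal_in T B" and C: "maximal_ideal_in T C"
    using max by blast+
  interpret A: ring_ideal T A using maximal_ideal_ring_ideal[OF T A] .
  interpret B: ring_ideal T B using maximal_ideal_ring_ideal[OF T B] .
  interpret C: ring_ideal T C using maximal_ideal_ring_ideal[OF T C] .
  have Jac: "Jac T = A \<inter> B \<inter> C" using Jac_eq_Int_three[OF max] .
  have yT: "y \<in> T" and yA: "y \<in> A" using y Jac A.ideal_subset by auto
  define F where "F = q * y"
  define G2 where "G2 = q * (e1 * e2)"
  define G3 where "G3 = q * (e1 * e3)"
  have FG: "F \<in> T" "G2 \<in> T" "G3 \<in> T"
    unfolding F_def G2_def G3_def using q y e1 e2 e3 unfolding Jac by simp_all
  have u: "?u = e1 * e1 * e1 * F + y * e1 + (e1 * e2) * G2 + (e1 * e3) * G3 + e2 * e2 + e3 * e3"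
    unfolding F_def G2_def G3_def by (simp add: algebra_simps)
  have "?u - F = (e1 - 1) * ((e1 * e1 + e1 + 1) * F) + y * e1 + (e1 * e2) * G2 + (e1 * e3) * G3
      + e2 * e2 + e3 * e3"
    unfolding u by (simp add: algebra_simps)
  also have "\<dots> \<in> A" using e1 e2 e3 FG yA yT by simp
  finally have "?u \<notin> A" using A.notin_ideal_if_diff_mem qy unfolding F_def by blast
  have "?u - 1 = e1 * e1 * e1 * F + y * e1 + (e1 * e2) * G2 + (e1 * e3) * G3
      + (e2 - 1) * (e2 + 1) + e3 * e3"
    unfolding u by (simp add: algebra_simps)
  also have "\<dots> \<in> B" using e1 e2 e3 FG yT by simp
  finally have "?u \<notin> B" using B.notin_ideal_if_diff_mem one_notin_maximal_ideal[OF T B] by blast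
  have "?u - 1 = e1 * e1 * e1 * F + y * e1 + (e1 * e2) * G2 + (e1 * e3) * G3
      + e2 * e2 + (e3 - 1) * (e3 + 1)"
    unfolding u by (simp add: algebra_simps)
  also have "\<dots> \<in> C" using e1 e2 e3 FG yT by simp
  finally have "?u \<notin> C" using C.notin_ideal_if_diff_mem one_notin_maximal_ideal[OF T C] by blast
  with \<open>?u \<notin> A\<close> \<open>?u \<notin> B\<close> have "?u \<notin> N" if "maximal_ideal_in T N" for N
    using that max by blast
  moreover have "?u \<in> T" unfolding u using e1 e2 e3 FG yT by simp
  ultimately show ?thesis using unit_if_notin_maximal_ideals[OF T] by blast
qed

text \<open>With e1, e2, e3 idempotent modulo Jac T, the generator is a = y e1 + e2^2 + e3^2:
  a (q e1^2 + 1) is a unit, while q e1^2 maps A into T.\<close>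
lemma principal_maximal_ideal_of_three:
  assumes T: "is_subring T" and max: "{N. maximal_ideal_in T N} = {A, B, C}"
    and distinct: "A \<noteq> B" "A \<noteq> C" "B \<noteq> C"
    and y: "y \<in> Jac T" and q: "\<And>x. x \<in> Jac T \<Longrightarrow> q * x \<in> T" and qy: "q * y \<notin> A"
  shows "principal_ideal_in T A"
proof -
  interpret subring T using T by unfold_locales
  have A: "maximal_ideal_in T A" and B: "maximal_ideal_in T B" and C: "maximal_ideal_in T C"
    using max by blast+
  interpret A: ring_ideal T A using maximal_ideal_ring_ideal[OF T A] .
  interpret B: ring_ideal T B using maximal_ideal_ring_ideal[OF T B] .
  interpret C: ring_ideal T C using maximal_ideal_ring_ideal[OF T C] .
  have Jac: "Jac T = A \<inter> B \<inter> C" using Jac_eq_Int_three[OF max] .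
  obtain e1 where e1: "e1 \<in> T" "e1 \<in> B" "e1 \<in> C" "e1 - 1 \<in> A"
    using exists_separating_element[OF T A B C] distinct by blast
  obtain e2 where e2: "e2 \<in> T" "e2 \<in> A" "e2 \<in> C" "e2 - 1 \<in> B"
    using exists_separating_element[OF T B A C] distinct by metis
  obtain e3 where e3: "e3 \<in> T" "e3 \<in> A" "e3 \<in> B" "e3 - 1 \<in> C"
    using exists_separating_element[OF T C A B] distinct by metis
  define a where "a = y * e1 + e2 * e2 + e3 * e3"
  define b where "b = q * (e1 * e1) + 1"
  have aA: "a \<in> A" unfolding a_def using y e1 e2 e3 unfolding Jac by simp
  have bA: "b * x \<in> T" if "x \<in> A" for x
  proof -
    have "e1 * e1 * x \<in> Jac T" unfolding Jac using that A.ideal_subset e1 by simp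
    moreover have "b * x = q * (e1 * e1 * x) + x" unfolding b_def by (simp add: algebra_simps)
    ultimately show ?thesis using q that A.ideal_subset by simp
  qed
  obtain z where "z \<in> T" "a * b * z = 1"
    using mult_unit_of_three[OF T max y q qy e1 e2 e3] unfolding a_def b_def by blast
  then have "A = {s * a | s. s \<in> T}"
    using ideal_eq_principal_if_unit[OF T A.is_ideal aA bA] by blast
  then show ?thesis unfolding principal_ideal_in_def using aA A.ideal_subset by blast
qed

section \<open>Quadratic rings whose R_\<infinity> has three maximal ideals\<close>

locale quadratic_ext_three_maximal = quadratic_local_ext +
  fixes N1 N2 N3 :: "'a::comm_ring_1 set" and b c :: 'a
  assumes maximal_ideals: "{N. maximal_ideal_in T N} = {N1, N2, N3}"
    and distinct: "N1 \<noteq> N2" "N1 \<noteq> N3" "N2 \<noteq> N3"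
    and stable: "stable M" and b: "b \<in> M" "b * c = 1"
    and Endo_subset: "Endo M \<subseteq> T"
begin

lemma maximal_N: "maximal_ideal_in T N1" "maximal_ideal_in T N2" "maximal_ideal_in T N3"
  using maximal_ideals by blast+

lemma other_maximal_ideals:
  assumes "maximal_ideal_in T A"
  obtains B C where "{N. maximal_ideal_in T N} = {A, B, C}" "A \<noteq> B" "A \<noteq> C" "B \<noteq> C"
proof -
  have "A = N1 \<or> A = N2 \<or> A = N3" using assms maximal_ideals by blast
  then show ?thesis
  proof (elim disjE)
    assume "A = N1" then show ?thesis using that maximal_ideals distinct by blast
  next
    assume "A = N2" then show ?thesis
      using that[of N1 N3] maximal_ideals distinct by (simp add: insert_commute)
  next
    assume "A = N3" then show ?thesis
      using that[of N1 N2] maximal_ideals distinct by (simp add: insert_commute)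
  qed
qed

lemma residue_two_T:
  assumes A: "maximal_ideal_in T A" and "x \<in> T"
  shows "x \<in> A \<or> x - 1 \<in> A"
proof -
  obtain B C where "{N. maximal_ideal_in T N} = {A, B, C}" "A \<noteq> B" "A \<noteq> C" "B \<noteq> C"
    using other_maximal_ideals[OF A] .
  then show ?thesis using ext_residue_two[of A B C x] \<open>x \<in> T\<close> by blast
qed

lemma residue_two_R: "r \<in> R \<Longrightarrow> r \<in> M \<or> r - 1 \<in> M"
  using base_residue_two[OF maximal_N distinct] .

lemma Jac_Endo_M: "Jac (Endo M) = M"
  using Jac_Endo_eq[OF maximal_N distinct Endo_subset stable b] .

lemma regular_maximal_ideal: "maximal_ideal_in T A \<Longrightarrow> regular_ideal_in T A"
  using M_subset_maximal_ideal[OF _ b(1)] nonzerodivisor_if_inverse[OF _ b(2)] b(1)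
  unfolding regular_ideal_in_def by (metis R_subset_T M_subset_R maximal_ideal_T ring_ideal.is_ideal)

lemma card_residue_ring_T: "maximal_ideal_in T A \<Longrightarrow> card (residue_ring T A) = 2"
  using ring_ideal.card_residue_ring_eq_2_iff[OF maximal_ideal_T] residue_two_T
  by (simp add: maximal_ideal_in_def)

context
  assumes Endo_eq: "Endo M = T"
begin

lemma Jac_T: "Jac T = M"
  using Jac_Endo_M Endo_eq by simp

lemma principal_maximal_ideal: "maximal_ideal_in T A \<Longrightarrow> principal_ideal_in T A"
proof -
  assume A: "maximal_ideal_in T A"
  interpret A: ring_ideal T A using maximal_ideal_T[OF A] .
  obtain Y q where Y: "Y \<subseteq> M" and q: "\<And>y x. y \<in> Y \<Longrightarrow> x \<in> M \<Longrightarrow> q y * x \<in> Endo M"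
    and sum: "(\<Sum>y\<in>Y. q y * y) = 1"
    using stable_ideal_invertible[OF M.is_ideal stable b] by metis
  have "\<exists>y\<in>Y. q y * y \<notin> A"
  proof (rule ccontr)
    assume "\<not> ?thesis"
    then have "(\<Sum>y\<in>Y. q y * y) \<in> A" by (intro A.ideal_sum) blast
    then show False using sum one_notin_maximal_ideal[OF subring_T A] by simp
  qed
  then obtain y where y: "y \<in> Y" "q y * y \<notin> A" by blast
  obtain B C where BC: "{N. maximal_ideal_in T N} = {A, B, C}" "A \<noteq> B" "A \<noteq> C" "B \<noteq> C"
    using other_maximal_ideals[OF A] .
  show ?thesis
  proof (rule principal_maximal_ideal_of_three[OF subring_T BC])
    show "y \<in> Jac T" using y(1) Y Jac_T by blast
    show "q y * x \<in> T" if "x \<in> Jac T" for x using q[OF y(1)] that Jac_T Endo_eq by blast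
  qed fact
qed

lemma R_eq_prime_subring_plus_Jac: "R = {a + j | a j. a \<in> prime_subring \<and> j \<in> Jac T}"
proof
  show "R \<subseteq> {a + j | a j. a \<in> prime_subring \<and> j \<in> Jac T}"
  proof
    fix r assume "r \<in> R"
    have "(0::'a) \<in> prime_subring" "(1::'a) \<in> prime_subring"
      unfolding prime_subring_def by (metis of_int_0 rangeI, metis of_int_1 rangeI)
    moreover have "r = 0 + r" "r = 1 + (r - 1)" by simp_all
    ultimately show "r \<in> {a + j | a j. a \<in> prime_subring \<and> j \<in> Jac T}"
      using residue_two_R[OF \<open>r \<in> R\<close>] unfolding Jac_T by blast
  qed
  show "{a + j | a j. a \<in> prime_subring \<and> j \<in> Jac T} \<subseteq> R"
    unfolding Jac_T prime_subring_def by auto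
qed

end

end

lemma three_maximal_residue_two_if_quadratic_ring:
  assumes TQ: "is_total_quotient_ring R" and quadratic: "quadratic_ring R"
    and three: "card {M. maximal_ideal_in (Rinf R) M} = 3"
  shows "\<exists>S. is_subring S \<and> R \<subseteq> S \<and>
       card {M. maximal_ideal_in S M} = 3 \<and>
       (\<forall>M. maximal_ideal_in S M \<longrightarrow>
          principal_ideal_in S M \<and> regular_ideal_in S M \<and> card (residue_ring S M) = 2) \<and>
       R = {a + j | a j. a \<in> prime_subring \<and> j \<in> Jac S}"
proof -
  have local: "local_ring R" and reg: "regular_ideal_in R (Jac R)" and stable: "stable (Jac R)"
    and ext: "quadratic_ext R (Rinf R)"
    using quadratic by (simp_all add: quadratic_ring_def)
  have R: "is_subring R" using local by (simp add: local_ring_def)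
  obtain M where M: "maximal_ideal_in R M"
    using local unfolding local_ring_def by (meson ex1_implies_ex)
  have JacR: "Jac R = M" using local_ring_Jac[OF local M] .
  obtain N1 N2 N3 where N: "{N. maximal_ideal_in (Rinf R) N} = {N1, N2, N3}"
    "N1 \<noteq> N2" "N2 \<noteq> N3" "N1 \<noteq> N3"
    using three unfolding card_3_iff by blast
  obtain b where b: "b \<in> M" "nonzerodivisor_in R b"
    using reg JacR unfolding regular_ideal_in_def by blast
  obtain c where c: "b * c = 1"
    using total_quotient_ring_inverse[OF TQ b(2)] by blast
  have R1: "Rseq R 1 = Endo M" using JacR by simp
  interpret quadratic_ext_three_maximal R M "Rinf R" N1 N2 N3 b c
    using local M Rinf_subring[OF R] ext N stable JacR b(1) c Rseq_one_subset_Rinf[of R] R1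
    by unfold_locales simp_all
  have E: "Endo M = Rinf R"
    using Rinf_eq_Rseq_one[of R] Jac_Endo_M R1 JacR by simp
  have "\<forall>N. maximal_ideal_in (Rinf R) N \<longrightarrow> principal_ideal_in (Rinf R) N \<and>
      regular_ideal_in (Rinf R) N \<and> card (residue_ring (Rinf R) N) = 2"
    using principal_maximal_ideal[OF E] regular_maximal_ideal card_residue_ring_T by blast
  then show ?thesis
    using Rinf_subring[OF R] subset_Rinf[of R] three R_eq_prime_subring_plus_Jac[OF E]
    by (intro exI[of _ "Rinf R"]) simp
qed

section \<open>Three maximal ideals with residue field F_2\<close>

text \<open>Reading \<open>\<noteq>\<close> on bool as addition in F_2: on any three points of F_2^2 the
  product xy agrees with an affine function Ax + By + C.\<close>
lemma conj_eq_affine_at_three_points: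
  "\<exists>A B C. ((X1 \<and> Y1) = ((A \<and> X1) \<noteq> ((B \<and> Y1) \<noteq> C))) \<and>
            ((X2 \<and> Y2) = ((A \<and> X2) \<noteq> ((B \<and> Y2) \<noteq> C))) \<and>
            ((X3 \<and> Y3) = ((A \<and> X3) \<noteq> ((B \<and> Y3) \<noteq> C)))"
  by (cases X1; cases X2; cases X3; cases Y1; cases Y2; cases Y3; simp add: ex_bool_eq)

lemma (in ring_ideal) product_affine_mod:
  assumes "2 \<in> I" and x: "x \<in> S" "x - of_bool X \<in> I" and y: "y \<in> S" "y - of_bool Y \<in> I"
    and affine: "(X \<and> Y) = ((A \<and> X) \<noteq> ((B \<and> Y) \<noteq> C))"
  shows "x * y - of_bool A * x - of_bool B * y - of_bool C \<in> I"
proof -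
  define k :: 'a where "k = of_bool X * of_bool Y - of_bool A * of_bool X - of_bool B * of_bool Y - of_bool C"
  have "k = 0 \<or> k = - 2"
    using affine unfolding k_def by (cases X; cases Y; cases A; cases B; cases C) simp_all
  then have "k \<in> I" using \<open>2 \<in> I\<close> by auto
  have "x * y - of_bool A * x - of_bool B * y - of_bool C
      = (x - of_bool X) * y + of_bool X * (y - of_bool Y) - of_bool A * (x - of_bool X)
        - of_bool B * (y - of_bool Y) + k"
    unfolding k_def by (simp add: algebra_simps)
  also have "\<dots> \<in> I" using x y \<open>k \<in> I\<close> by simp
  finally show ?thesis .
qed

lemma (in ring_ideal) residue_two_prime:
  assumes "\<forall>x\<in>S. x \<in> I \<or> x - 1 \<in> I" "x \<in> S" "x \<notin> I" "y \<in> S" "x * y \<in> I"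
  shows "y \<in> I"
proof -
  have "x - 1 \<in> I" using assms(1-3) by blast
  then have "x * y - (x - 1) * y \<in> I" using assms(4,5) by simp
  then show ?thesis by (simp add: algebra_simps)
qed

lemma nonzerodivisor_mult:
  assumes "is_subring S" and a: "nonzerodivisor_in S a" and b: "nonzerodivisor_in S b"
  shows "nonzerodivisor_in S (a * b)"
  unfolding nonzerodivisor_in_def
proof (intro conjI ballI impI)
  interpret subring S using assms(1) by unfold_locales
  have aS: "a \<in> S" and bS: "b \<in> S" using a b by (simp_all add: nonzerodivisor_in_def)
  then show "a * b \<in> S" by simp
  fix y assume y: "y \<in> S" "a * b * y = 0"
  then have "b * y = 0" using a bS unfolding nonzerodivisor_in_def by (simp add: mult.assoc)
  then show "y = 0" using b y(1) unfolding nonzerodivisor_in_def by blast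
qed

lemma principal_regular_ideal_generator:
  assumes "principal_ideal_in S A" "regular_ideal_in S A"
  obtains m where "m \<in> S" "A = {s * m | s. s \<in> S}" "nonzerodivisor_in S m"
proof -
  obtain m where m: "m \<in> S" "A = {s * m | s. s \<in> S}"
    using assms(1) unfolding principal_ideal_in_def by blast
  obtain b where b: "b \<in> A" "nonzerodivisor_in S b"
    using assms(2) unfolding regular_ideal_in_def by blast
  obtain s where s: "b = s * m" using b(1) m(2) by blast
  have "nonzerodivisor_in S m"
    unfolding nonzerodivisor_in_def
  proof (intro conjI ballI impI)
    fix y assume "y \<in> S" "m * y = 0"
    then have "b * y = 0" using s by (simp add: mult.assoc)
    then show "y = 0" using b(2) \<open>y \<in> S\<close> unfolding nonzerodivisor_in_def by blast
  qed fact
  with m show ?thesis using that by blast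
qed

lemma nonzerodivisor_cancel_total_quotient:
  assumes TQ: "is_total_quotient_ring R" and "R \<subseteq> S" and g: "nonzerodivisor_in S g"
    and "z * g = 0"
  shows "z = 0"
proof -
  obtain r b where rb: "r \<in> R" "nonzerodivisor_in R b" "z * b = r"
    using total_quotient_ring_fraction[OF TQ] by blast
  obtain c where c: "b * c = 1" using total_quotient_ring_inverse[OF TQ rb(2)] by blast
  have "g * r = (z * g) * b" using rb(3)[symmetric] by (simp add: ac_simps)
  then have "g * r = 0" using \<open>z * g = 0\<close> by simp
  moreover have "r \<in> S" using rb(1) \<open>R \<subseteq> S\<close> by blast
  ultimately have "r = 0" using g unfolding nonzerodivisor_in_def by blast
  then have "z * b * c = 0" using rb(3) by simp
  then show "z = 0" using c by (simp add: mult.assoc)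
qed

lemma Endo_principal_eq:
  assumes TQ: "is_total_quotient_ring R" and "R \<subseteq> S" and "is_subring S"
    and g: "nonzerodivisor_in S g"
  shows "Endo {s * g | s. s \<in> S} = S"
proof
  interpret subring S using \<open>is_subring S\<close> by unfold_locales
  show "S \<subseteq> Endo {s * g | s. s \<in> S}"
  proof (intro subsetI)
    fix t assume "t \<in> S"
    show "t \<in> Endo {s * g | s. s \<in> S}"
      unfolding Endo_def
    proof (rule CollectI, rule ballI)
    fix x assume "x \<in> {s * g | s. s \<in> S}"
    then obtain s where "s \<in> S" "x = s * g" by blast
    with \<open>t \<in> S\<close> show "t * x \<in> {s * g | s. s \<in> S}"
      by (intro CollectI exI[of _ "t * s"]) (simp add: mult.assoc)
    qed
  qed
  show "Endo {s * g | s. s \<in> S} \<subseteq> S"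
  proof
    fix q assume "q \<in> Endo {s * g | s. s \<in> S}"
    moreover have "g \<in> {s * g | s. s \<in> S}" by (auto intro!: exI[of _ 1])
    ultimately obtain s where s: "s \<in> S" "q * g = s * g" unfolding Endo_def by blast
    then have "(q - s) * g = 0" by (simp add: algebra_simps)
    then have "q - s = 0" using nonzerodivisor_cancel_total_quotient[OF TQ \<open>R \<subseteq> S\<close> g] by blast
    then show "q \<in> S" using s(1) by simp
  qed
qed

lemma nonzerodivisor_cofactor:
  assumes "is_subring S" and g: "nonzerodivisor_in S g"
  obtains h where "\<And>s. s \<in> S \<Longrightarrow> h (s * g) = s"
proof -
  interpret subring S using \<open>is_subring S\<close> by unfold_locales
  have "(SOME s'. s' \<in> S \<and> x = s' * g) = s" if s: "s \<in> S" "x = s * g" for x s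
  proof (rule some_equality)
    show "s \<in> S \<and> x = s * g" using s by simp
    fix s' assume s': "s' \<in> S \<and> x = s' * g"
    then have "g * (s' - s) = 0" using s(2) by (simp add: algebra_simps)
    moreover have "s' - s \<in> S" using s' s(1) by simp
    ultimately have "s' - s = 0" using g unfolding nonzerodivisor_in_def by blast
    then show "s' = s" by simp
  qed
  then show ?thesis using that[of "\<lambda>x. SOME s'. s' \<in> S \<and> x = s' * g"] by blast
qed

lemma projective_over_principal:
  assumes "is_subring S" and g: "nonzerodivisor_in S g"
  shows "projective_over S {s * g | s. s \<in> S}" (is "projective_over S ?I")
proof -
  interpret subring S using \<open>is_subring S\<close> by unfold_locales
  obtain h where h: "\<And>s. s \<in> S \<Longrightarrow> h (s * g) = s"
    using nonzerodivisor_cofactor[OF assms] by blast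
  have I: "x \<in> ?I \<longleftrightarrow> (\<exists>s\<in>S. x = s * g)" for x by blast
  have cofactor: "h x \<in> S" "h x * g = x" if "x \<in> ?I" for x
    using that h unfolding I by auto
  have gI: "g \<in> ?I" unfolding I by (intro bexI[of _ 1]) simp_all
  define f where "f x y = (if y = g then h x else 0)" for x y
  show ?thesis
    unfolding projective_over_def
  proof (intro conjI exI[of _ f] ballI)
    fix e x assume e: "e \<in> S" and x: "x \<in> ?I"
    have ex: "e * x = (e * h x) * g" "e * h x \<in> S"
      using cofactor[OF x] e by (simp_all add: mult.assoc)
    then show "e * x \<in> ?I" unfolding I by blast
    show "f (e * x) y = e * f x y" for y using h[OF ex(2)] ex(1) by (simp add: f_def)
  next
    fix x y assume "x \<in> ?I"
    then show "f x y \<in> S" using cofactor(1) by (simp add: f_def)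
  next
    fix x
    show "finite {y \<in> ?I. f x y \<noteq> 0}"
      by (rule finite_subset[of _ "{g}"]) (auto simp: f_def)
  next
    fix x assume x: "x \<in> ?I"
    show "x = (\<Sum>y\<in>{y \<in> ?I. f x y \<noteq> 0}. f x y * y)"
    proof (cases "h x = 0")
      case True then show ?thesis using cofactor(2)[OF x] by (simp add: f_def)
    next
      case False
      then have "{y \<in> ?I. f x y \<noteq> 0} = {g}" using gI by (auto simp: f_def)
      then show ?thesis using cofactor(2)[OF x] by (simp add: f_def)
    qed
  next
    fix x1 x2 y assume x: "x1 \<in> ?I" "x2 \<in> ?I"
    have "x1 + x2 = (h x1 + h x2) * g" "h x1 + h x2 \<in> S"
      using cofactor[OF x(1)] cofactor[OF x(2)] by (simp_all add: distrib_right)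
    then have "h (x1 + x2) = h x1 + h x2" using h by simp
    then show "f (x1 + x2) y = f x1 y + f x2 y" by (simp add: f_def)
  qed
qed

lemma generator_notin_other_maximal_ideal:
  assumes "is_subring S" and A: "maximal_ideal_in S A" and B: "maximal_ideal_in S B" and "A \<noteq> B"
    and m: "A = {s * m | s. s \<in> S}"
  shows "m \<notin> B"
proof
  assume "m \<in> B"
  interpret B: ring_ideal S B using maximal_ideal_ring_ideal[OF assms(1) B] .
  have "A \<subseteq> B"
  proof
    fix x assume "x \<in> A"
    then obtain s where "s \<in> S" "x = s * m" using m by blast
    then show "x \<in> B" using \<open>m \<in> B\<close> by simp
  qed
  then have "B = A \<or> B = S"
    using A B.is_ideal unfolding maximal_ideal_in_def by simp
  then show False
    using \<open>A \<noteq> B\<close> B unfolding maximal_ideal_in_def by auto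
qed

lemma principal_Int_maximal_ideal:
  assumes S: "is_subring S" and B: "maximal_ideal_in S B"
    and residue_two: "\<forall>x\<in>S. x \<in> B \<or> x - 1 \<in> B" and b: "B = {s * b | s. s \<in> S}"
    and a: "a \<in> S" "a \<notin> B"
  shows "{s * a | s. s \<in> S} \<inter> B = {s * (b * a) | s. s \<in> S}"
proof
  interpret subring S using S by unfold_locales
  interpret B: ring_ideal S B using maximal_ideal_ring_ideal[OF S B] .
  have "b \<in> B" unfolding b by (intro CollectI exI[of _ 1]) simp
  then have bS: "b \<in> S" by (rule B.ideal_subset)
  show "{s * a | s. s \<in> S} \<inter> B \<subseteq> {s * (b * a) | s. s \<in> S}"
  proof
    fix x assume "x \<in> {s * a | s. s \<in> S} \<inter> B"
    then obtain s where s: "s \<in> S" "x = s * a" "s * a \<in> B" by blast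
    then have "s \<in> B" using B.residue_two_prime[OF residue_two a(1,2) s(1)] by (simp add: mult.commute)
    then obtain t where "t \<in> S" "s = t * b" using b by blast
    with s(2) show "x \<in> {s * (b * a) | s. s \<in> S}" by (auto simp: mult.assoc)
  qed
  show "{s * (b * a) | s. s \<in> S} \<subseteq> {s * a | s. s \<in> S} \<inter> B"
  proof
    fix x assume "x \<in> {s * (b * a) | s. s \<in> S}"
    then obtain s where s: "s \<in> S" "x = s * (b * a)" by blast
    have "x = (s * b) * a" "x = (s * a) * b" using s(2) by (simp_all add: ac_simps)
    moreover have "s * b \<in> S" "s * a \<in> S" using s(1) bS a(1) by simp_all
    ultimately show "x \<in> {s * a | s. s \<in> S} \<inter> B" using b by blast
  qed
qed

locale three_maximal_residue_two =
  fixes R S M1 M2 M3 :: "'a::comm_ring_1 set"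
  assumes TQ: "is_total_quotient_ring R" and local: "local_ring R"
    and subring_S: "is_subring S" and R_subset_S: "R \<subseteq> S"
    and maximal_ideals: "{M. maximal_ideal_in S M} = {M1, M2, M3}"
    and distinct: "M1 \<noteq> M2" "M1 \<noteq> M3" "M2 \<noteq> M3"
    and maximal_props: "\<And>M. maximal_ideal_in S M \<Longrightarrow>
      principal_ideal_in S M \<and> regular_ideal_in S M \<and> card (residue_ring S M) = 2"
    and R_eq: "R = {a + j | a j. a \<in> prime_subring \<and> j \<in> Jac S}"
begin

lemma subring_R: "is_subring R"
  using local by (simp add: local_ring_def)

sublocale S: subring S using subring_S by unfold_locales
sublocale R: subring R using subring_R by unfold_locales

lemma maximal_M: "maximal_ideal_in S M1" "maximal_ideal_in S M2" "maximal_ideal_in S M3"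
  using maximal_ideals by blast+

lemma maximal_ring_ideal: "maximal_ideal_in S A \<Longrightarrow> ring_ideal S A"
  using maximal_ideal_ring_ideal[OF subring_S] .

lemma residue_two: "maximal_ideal_in S A \<Longrightarrow> \<forall>x\<in>S. x \<in> A \<or> x - 1 \<in> A"
  using ring_ideal.card_residue_ring_eq_2_iff[OF maximal_ring_ideal] maximal_props
  by (simp add: maximal_ideal_in_def)

lemma Jac_S: "Jac S = M1 \<inter> M2 \<inter> M3"
  using Jac_eq_Int_three[OF maximal_ideals] .

sublocale J: ring_ideal S "Jac S"
proof
  interpret M1: ring_ideal S M1 using maximal_ring_ideal[OF maximal_M(1)] .
  interpret M2: ring_ideal S M2 using maximal_ring_ideal[OF maximal_M(2)] .
  interpret M3: ring_ideal S M3 using maximal_ring_ideal[OF maximal_M(3)] .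
  show "ideal_in S (Jac S)"
    unfolding Jac_S by (rule ideal_inI) (auto intro: M1.ideal_subset)
qed

lemma two_mem_Jac: "2 \<in> Jac S"
proof -
  have "2 \<in> A" if "maximal_ideal_in S A" for A
    using residue_two[OF that] one_notin_maximal_ideal[OF subring_S that] by force
  then show ?thesis unfolding Jac_def by blast
qed

lemma of_int_even_mem_Jac: "even k \<Longrightarrow> of_int k \<in> Jac S"
  using J.ideal_mult_left[OF S.of_int_mem two_mem_Jac] by (auto elim!: evenE simp: mult.commute)

lemma Jac_S_subset_R: "Jac S \<subseteq> R"
proof
  fix j assume "j \<in> Jac S"
  moreover have "(0::'a) \<in> prime_subring" unfolding prime_subring_def by (metis of_int_0 rangeI)
  ultimately show "j \<in> R" unfolding R_eq by force
qed

lemma Jac_S_maximal_R: "maximal_ideal_in R (Jac S)"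
  unfolding maximal_ideal_in_def
proof (intro conjI allI impI)
  show "ideal_in R (Jac S)"
    using Jac_S_subset_R R_subset_S by (intro ideal_inI) auto
  show "Jac S \<noteq> R"
    using one_notin_maximal_ideal[OF subring_S maximal_M(1)] Jac_S by auto
  fix I assume I: "ideal_in R I \<and> Jac S \<subseteq> I"
  interpret I: ring_ideal R I using I by unfold_locales simp
  show "I = Jac S \<or> I = R"
  proof (cases "I \<subseteq> Jac S")
    case True then show ?thesis using I by blast
  next
    case False
    then obtain x where x: "x \<in> I" "x \<notin> Jac S" by blast
    then obtain k j where kj: "j \<in> Jac S" "x = of_int k + j"
      using I.ideal_subset unfolding R_eq prime_subring_def by blast
    have "odd k" using x(2) kj of_int_even_mem_Jac J.ideal_add by blast
    then have "of_int (k - 1) \<in> Jac S" by (intro of_int_even_mem_Jac) simp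
    then have "x - 1 - j \<in> I" using kj I by auto
    then have "x - (x - 1 - j) - j \<in> I" using x(1) kj(1) I by (metis I.ideal_diff subsetD)
    then have "1 \<in> I" by simp
    then show ?thesis using I.one_mem_ideal_iff by blast
  qed
qed

lemma Jac_R: "Jac R = Jac S"
  using local_ring_Jac[OF local Jac_S_maximal_R] .

lemma Jac_S_principal:
  obtains g where "g \<in> S" "Jac S = {s * g | s. s \<in> S}" "nonzerodivisor_in S g"
proof -
  have gen: "\<exists>m. m \<in> S \<and> M = {s * m | s. s \<in> S} \<and> nonzerodivisor_in S m" if "maximal_ideal_in S M" for M
  proof -
    have "principal_ideal_in S M" "regular_ideal_in S M" using maximal_props[OF that] by simp_all
    from principal_regular_ideal_generator[OF this] show ?thesis by blast
  qed
  obtain m1 where m1: "m1 \<in> S" "M1 = {s * m1 | s. s \<in> S}" "nonzerodivisor_in S m1"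
    using gen[OF maximal_M(1)] by blast
  obtain m2 where m2: "m2 \<in> S" "M2 = {s * m2 | s. s \<in> S}" "nonzerodivisor_in S m2"
    using gen[OF maximal_M(2)] by blast
  obtain m3 where m3: "m3 \<in> S" "M3 = {s * m3 | s. s \<in> S}" "nonzerodivisor_in S m3"
    using gen[OF maximal_M(3)] by blast
  interpret M3: ring_ideal S M3 using maximal_ring_ideal[OF maximal_M(3)] .
  have notin: "m1 \<notin> M2" "m1 \<notin> M3" "m2 \<notin> M3"
    using generator_notin_other_maximal_ideal[OF subring_S maximal_M(1) maximal_M(2) distinct(1) m1(2)]
      generator_notin_other_maximal_ideal[OF subring_S maximal_M(1) maximal_M(3) distinct(2) m1(2)]
      generator_notin_other_maximal_ideal[OF subring_S maximal_M(2) maximal_M(3) distinct(3) m2(2)]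
    by simp_all
  have "m2 * m1 \<notin> M3"
    using M3.residue_two_prime[OF residue_two[OF maximal_M(3)] m2(1) notin(3) m1(1)] notin(2) by blast
  have "M1 \<inter> M2 = {s * (m2 * m1) | s. s \<in> S}"
    using principal_Int_maximal_ideal[OF subring_S maximal_M(2) residue_two[OF maximal_M(2)] m2(2)
        m1(1) notin(1)] m1(2) by simp
  then have "Jac S = {s * (m3 * (m2 * m1)) | s. s \<in> S}"
    using principal_Int_maximal_ideal[OF subring_S maximal_M(3) residue_two[OF maximal_M(3)] m3(2)
        _ \<open>m2 * m1 \<notin> M3\<close>] m1(1) m2(1) unfolding Jac_S by simp
  moreover have "nonzerodivisor_in S (m3 * (m2 * m1))"
    using nonzerodivisor_mult[OF subring_S] m1(3) m2(3) m3(3) by blast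
  moreover have "m3 * (m2 * m1) \<in> S" using m1(1) m2(1) m3(1) by simp
  ultimately show ?thesis using that by blast
qed

lemma Endo_Jac_S: "Endo (Jac S) = S"
proof -
  obtain g where "Jac S = {s * g | s. s \<in> S}" "nonzerodivisor_in S g"
    using Jac_S_principal .
  then show ?thesis using Endo_principal_eq[OF TQ R_subset_S subring_S] by simp
qed

lemma Rinf_eq_S: "Rinf R = S"
  using Rinf_eq_Rseq_one[of R] Endo_Jac_S Jac_R by simp

lemma stable_Jac_R: "stable (Jac R)"
proof -
  obtain g where "Jac S = {s * g | s. s \<in> S}" "nonzerodivisor_in S g"
    using Jac_S_principal .
  then show ?thesis
    unfolding stable_def Jac_R Endo_Jac_S using projective_over_principal[OF subring_S] by simp
qed

lemma regular_Jac_R: "regular_ideal_in R (Jac R)"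
proof -
  obtain g where g: "g \<in> S" "Jac S = {s * g | s. s \<in> S}" "nonzerodivisor_in S g"
    using Jac_S_principal .
  have "g \<in> Jac S" using g(1,2) by (auto intro!: exI[of _ 1])
  moreover have "nonzerodivisor_in R g"
    using g(3) \<open>g \<in> Jac S\<close> Jac_S_subset_R R_subset_S unfolding nonzerodivisor_in_def by blast
  ultimately show ?thesis
    using Jac_S_maximal_R unfolding regular_ideal_in_def Jac_R maximal_ideal_in_def by blast
qed

lemma quadratic_ext_S: "quadratic_ext R S"
  unfolding quadratic_ext_def
proof (intro conjI R_subset_S ballI)
  fix x y assume x: "x \<in> S" and y: "y \<in> S"
  \<comment> \<open>X N and Y N are the residues of x and y in S / N = F_2.\<close>
  define X where "X N = (x \<notin> N)" for N
  define Y where "Y N = (y \<notin> N)" for N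
  obtain A B C where ABC:
    "(X M1 \<and> Y M1) = ((A \<and> X M1) \<noteq> ((B \<and> Y M1) \<noteq> C))"
    "(X M2 \<and> Y M2) = ((A \<and> X M2) \<noteq> ((B \<and> Y M2) \<noteq> C))"
    "(X M3 \<and> Y M3) = ((A \<and> X M3) \<noteq> ((B \<and> Y M3) \<noteq> C))"
    using conj_eq_affine_at_three_points[of "X M1" "Y M1" "X M2" "Y M2" "X M3" "Y M3"]
    by (elim exE conjE) (rule that)
  let ?z = "x * y - of_bool A * x - of_bool B * y - of_bool C"
  have z: "?z \<in> N"
    if N: "maximal_ideal_in S N" and affine: "(X N \<and> Y N) = ((A \<and> X N) \<noteq> ((B \<and> Y N) \<noteq> C))" for N
  proof (rule ring_ideal.product_affine_mod[OF maximal_ring_ideal[OF N] _ x _ y _ affine])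
    show "2 \<in> N" using two_mem_Jac N unfolding Jac_def by blast
    show "x - of_bool (X N) \<in> N" "y - of_bool (Y N) \<in> N"
      using residue_two[OF N] x y unfolding X_def Y_def by auto
  qed
  have "?z \<in> Jac S"
    unfolding Jac_S using z[OF maximal_M(1) ABC(1)] z[OF maximal_M(2) ABC(2)] z[OF maximal_M(3) ABC(3)]
    by blast
  then have "of_bool C + ?z \<in> R" using Jac_S_subset_R R.add_mem[OF R.of_bool_mem] by blast
  moreover have "x * y = of_bool A * x + of_bool B * y + (of_bool C + ?z)"
    by (simp add: algebra_simps)
  ultimately show "\<exists>a\<in>R. \<exists>b\<in>R. \<exists>c\<in>R. x * y = a * x + b * y + c"
    using R.of_bool_mem by blast
qed

lemma quadratic_ring_R: "quadratic_ring R"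
  unfolding quadratic_ring_def
  using local regular_Jac_R stable_Jac_R quadratic_ext_S Rinf_eq_S by simp

end


lemma quadratic_ring_if_three_maximal_residue_two:
  assumes "is_total_quotient_ring R" and "local_ring R"
    and "\<exists>S. is_subring S \<and> R \<subseteq> S \<and>
       card {M. maximal_ideal_in S M} = 3 \<and>
       (\<forall>M. maximal_ideal_in S M \<longrightarrow>
          principal_ideal_in S M \<and> regular_ideal_in S M \<and> card (residue_ring S M) = 2) \<and>
       R = {a + j | a j. a \<in> prime_subring \<and> j \<in> Jac S}"
  shows "quadratic_ring R \<and> card {M. maximal_ideal_in (Rinf R) M} = 3"
proof -
  obtain S M1 M2 M3 where S: "is_subring S" "R \<subseteq> S"
      "{M. maximal_ideal_in S M} = {M1, M2, M3}" "M1 \<noteq> M2" "M2 \<noteq> M3" "M1 \<noteq> M3"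
      "\<And>M. maximal_ideal_in S M \<Longrightarrow>
        principal_ideal_in S M \<and> regular_ideal_in S M \<and> card (residue_ring S M) = 2"
      "R = {a + j | a j. a \<in> prime_subring \<and> j \<in> Jac S}"
    using assms(3) unfolding card_3_iff by blast
  interpret three_maximal_residue_two R S M1 M2 M3
    using assms(1,2) S by unfold_locales simp_all
  show ?thesis using quadratic_ring_R Rinf_eq_S S(3-6) by simp
qed

theorem theorem3p13:
  fixes R :: "'a::comm_ring_1 set"
  assumes "is_total_quotient_ring R"
    and "local_ring R"
    and "regular_ideal_in R (Jac R)"
  shows "(quadratic_ring R \<and> card {M. maximal_ideal_in (Rinf R) M} = 3) \<longleftrightarrow>
    (\<exists>S. is_subring S \<and> R \<subseteq> S \<and>
       card {M. maximal_ideal_in S M} = 3 \<and>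
       (\<forall>M. maximal_ideal_in S M \<longrightarrow>
          principal_ideal_in S M \<and> regular_ideal_in S M \<and> card (residue_ring S M) = 2) \<and>
       R = {a + j | a j. a \<in> prime_subring \<and> j \<in> Jac S})"
proof -
  show ?thesis
    using three_maximal_residue_two_if_quadratic_ring[OF assms(1)]
      quadratic_ring_if_three_maximal_residue_two[OF assms(1,2)]
    by blast
qed

end
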